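(* Let $R$ be a ring, $S$ an almost left Ore set of $R$, $\mathfrak{a}=\mathrm{ass}_R(S)$, and $\mathfrak{a}_r$ the ideal of $R$ generated by $\mathrm{ass}_r(S)=\{r\in R:rs=0\text{ for some }s\in S\}$. Then \begin{enumerate} \item $S_r:=(S+\mathfrak{a}_r)/\mathfrak{a}_r$ is a left Ore set of $R/\mathfrak{a}_r$. \item The following are equivalent: $S$ is left localizable in $R$; $S_r$ is left localizable in $R/\mathfrak{a}_r$; ${}'\mathfrak{a}(S_r)\neq R/\mathfrak{a}_r$; ${}'\mathfrak{a}(S)\ne R$. \item Suppose ${}'\mathfrak{a}:={}'\mathfrak{a}(S)\neq R$. Let ${}'\pi:R\to{}'R=R/{}'\mathfrak{a}$, $r\mapsto{}'r=r+{}'\mathfrak{a}$, and ${}'S={}'\pi(S)$. Then \begin{enumerate} \item ${}'S$ is a left denominator set of ${}'R$ contained in ${}'\mathcal{C}_{{}'R}$; \item $\mathfrak{a}={}'\pi^{-1}(\mathrm{ass}_l({}'S))$; \item $R\langle S^{-1}\rangle\simeq{}'S^{-1}\,{}'R$, an $R$-isomorphism. \end{enumerate} \end{enumerate}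
   Context: Rings are associative with $1$. Multiplicative set: $SS\subseteq S$, $1\in S$, $0\notin S$. Almost left Ore set: for all $s\in S,r\in R$ there are $s_1,s_2\in S$, $r_1\in R$ with $(s_1r-r_1s)s_2=0$. Left Ore set: $Sr\cap Rs\ne\emptyset$ for all $r\in R,s\in S$; left denominator set: left Ore and $rs=0$ ($s\in S$) implies $tr=0$ for some $t\in S$; $T^{-1}A$ is the left Ore localization; $\mathrm{ass}_l(T)=\{a:ta=0\text{ for some }t\in T\}$. For a multiplicative set $T$ of a ring $A$: $A\langle T^{-1}\rangle=A\langle X_T\rangle/I_T$ ($A\langle X_T\rangle$ freely generated by $A$ and noncommuting $x_t$, $I_T$ generated by $tx_t-1,x_tt-1$); $\mathrm{ass}_A(T)=\ker(A\to A\langle T^{-1}\rangle)$; $T$ is left localizable if $A\langle T^{-1}\rangle\neq0$ and every element has the form $(x_t+I_T)(a+I_T)$. ${}'\mathcal{C}_A=\{a\in A: xa=0\Rightarrow x=0\}$, and ${}'\mathfrak{a}(T)$ is the least ideal $\mathfrak{b}$ of $A$ such that the image of $T$ in $A/\mathfrak{b}$ lies in ${}'\mathcal{C}_{A/\mathfrak{b}}$ (it exists). *)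

theory Defs
  imports "HOL-Algebra.Algebra"
begin

definition multiplicative_set :: "('a,'m) ring_scheme \<Rightarrow> 'a set \<Rightarrow> bool" where
  "multiplicative_set A S \<longleftrightarrow> S \<subseteq> carrier A \<and> \<one>\<^bsub>A\<^esub> \<in> S \<and> \<zero>\<^bsub>A\<^esub> \<notin> S \<and>
     (\<forall>s\<in>S. \<forall>t\<in>S. s \<otimes>\<^bsub>A\<^esub> t \<in> S)"

definition almost_left_Ore :: "('a,'m) ring_scheme \<Rightarrow> 'a set \<Rightarrow> bool" where
  "almost_left_Ore A S \<longleftrightarrow> multiplicative_set A S \<and>
     (\<forall>s\<in>S. \<forall>r\<in>carrier A. \<exists>s1\<in>S. \<exists>s2\<in>S. \<exists>r1\<in>carrier A.
        (s1 \<otimes>\<^bsub>A\<^esub> r \<ominus>\<^bsub>A\<^esub> r1 \<otimes>\<^bsub>A\<^esub> s) \<otimes>\<^bsub>A\<^esub> s2 = \<zero>\<^bsub>A\<^esub>)"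

text \<open>Left Ore set: a multiplicative monoid S (0 is allowed) with Sr \<inter> Rs nonempty.\<close>
definition left_Ore_set :: "('a,'m) ring_scheme \<Rightarrow> 'a set \<Rightarrow> bool" where
  "left_Ore_set A S \<longleftrightarrow> S \<subseteq> carrier A \<and> \<one>\<^bsub>A\<^esub> \<in> S \<and> (\<forall>s\<in>S. \<forall>t\<in>S. s \<otimes>\<^bsub>A\<^esub> t \<in> S) \<and>
     (\<forall>r\<in>carrier A. \<forall>s\<in>S. \<exists>s'\<in>S. \<exists>r'\<in>carrier A. s' \<otimes>\<^bsub>A\<^esub> r = r' \<otimes>\<^bsub>A\<^esub> s)"

definition left_denominator_set :: "('a,'m) ring_scheme \<Rightarrow> 'a set \<Rightarrow> bool" where
  "left_denominator_set A S \<longleftrightarrow> left_Ore_set A S \<and>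
     (\<forall>r\<in>carrier A. \<forall>s\<in>S. r \<otimes>\<^bsub>A\<^esub> s = \<zero>\<^bsub>A\<^esub> \<longrightarrow> (\<exists>t\<in>S. t \<otimes>\<^bsub>A\<^esub> r = \<zero>\<^bsub>A\<^esub>))"

definition ass_l :: "('a,'m) ring_scheme \<Rightarrow> 'a set \<Rightarrow> 'a set" where
  "ass_l A T = {a \<in> carrier A. \<exists>t\<in>T. t \<otimes>\<^bsub>A\<^esub> a = \<zero>\<^bsub>A\<^esub>}"

definition ass_r :: "('a,'m) ring_scheme \<Rightarrow> 'a set \<Rightarrow> 'a set" where
  "ass_r A T = {a \<in> carrier A. \<exists>t\<in>T. a \<otimes>\<^bsub>A\<^esub> t = \<zero>\<^bsub>A\<^esub>}"

definition left_regular :: "('a,'m) ring_scheme \<Rightarrow> 'a set" where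
  "left_regular A = {a \<in> carrier A. \<forall>x\<in>carrier A. x \<otimes>\<^bsub>A\<^esub> a = \<zero>\<^bsub>A\<^esub> \<longrightarrow> x = \<zero>\<^bsub>A\<^esub>}"

text \<open>'a(T): the least ideal b such that the image of T in A/b consists of left regular
  elements (rendered as the intersection of all such ideals; A itself is one of them).\<close>
definition prime_a :: "('a,'m) ring_scheme \<Rightarrow> 'a set \<Rightarrow> 'a set" where
  "prime_a A T = \<Inter>{b. ideal b A \<and> (\<forall>t\<in>T. b +>\<^bsub>A\<^esub> t \<in> left_regular (A Quot b))}"

text \<open>Free (noncommutative) ring Z<Y> on an alphabet Y: finitely supported integer
  functions on words over Y.\<close>
definition free_ring :: "'y set \<Rightarrow> ('y list \<Rightarrow> int) ring" where
  "free_ring Y = \<lparr>carrier = {f. finite {w. f w \<noteq> 0} \<and> (\<forall>w. f w \<noteq> 0 \<longrightarrow> set w \<subseteq> Y)},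
     monoid.mult = (\<lambda>f g w. \<Sum>(u,v)\<in>{(u,v). u @ v = w}. f u * g v),
     monoid.one = (\<lambda>w. if w = [] then 1 else 0),
     ring.zero = (\<lambda>w. 0),
     ring.add = (\<lambda>f g w. f w + g w)\<rparr>"

definition letter :: "'y \<Rightarrow> ('y list \<Rightarrow> int)" where
  "letter y = (\<lambda>w. if w = [y] then 1 else 0)"

text \<open>Alphabet: Inl a (a in A) stands for a, Inr t (t in T) stands for x_t.\<close>
definition loc_alphabet :: "('a,'m) ring_scheme \<Rightarrow> 'a set \<Rightarrow> ('a + 'a) set" where
  "loc_alphabet A T = Inl ` carrier A \<union> Inr ` T"

abbreviation loc_free :: "('a,'m) ring_scheme \<Rightarrow> 'a set \<Rightarrow> (('a + 'a) list \<Rightarrow> int) ring" where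
  "loc_free A T \<equiv> free_ring (loc_alphabet A T)"

text \<open>Relations: those making a \<mapsto> Inl a a ring homomorphism (so the quotient by them is
  A<X_T>), together with the relations of I_T:  t x_t - 1, x_t t - 1.\<close>
definition loc_rels :: "('a,'m) ring_scheme \<Rightarrow> 'a set \<Rightarrow> (('a + 'a) list \<Rightarrow> int) set" where
  "loc_rels A T =
     {letter (Inl (a \<oplus>\<^bsub>A\<^esub> b)) \<ominus>\<^bsub>loc_free A T\<^esub> (letter (Inl a) \<oplus>\<^bsub>loc_free A T\<^esub> letter (Inl b))
        | a b. a \<in> carrier A \<and> b \<in> carrier A}
   \<union> {letter (Inl (a \<otimes>\<^bsub>A\<^esub> b)) \<ominus>\<^bsub>loc_free A T\<^esub> (letter (Inl a) \<otimes>\<^bsub>loc_free A T\<^esub> letter (Inl b))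
        | a b. a \<in> carrier A \<and> b \<in> carrier A}
   \<union> {letter (Inl \<one>\<^bsub>A\<^esub>) \<ominus>\<^bsub>loc_free A T\<^esub> \<one>\<^bsub>loc_free A T\<^esub>}
   \<union> {letter (Inl t) \<otimes>\<^bsub>loc_free A T\<^esub> letter (Inr t) \<ominus>\<^bsub>loc_free A T\<^esub> \<one>\<^bsub>loc_free A T\<^esub> | t. t \<in> T}
   \<union> {letter (Inr t) \<otimes>\<^bsub>loc_free A T\<^esub> letter (Inl t) \<ominus>\<^bsub>loc_free A T\<^esub> \<one>\<^bsub>loc_free A T\<^esub> | t. t \<in> T}"

definition loc_ideal :: "('a,'m) ring_scheme \<Rightarrow> 'a set \<Rightarrow> (('a + 'a) list \<Rightarrow> int) set" where
  "loc_ideal A T = Idl\<^bsub>loc_free A T\<^esub> (loc_rels A T)"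

definition univ_loc :: "('a,'m) ring_scheme \<Rightarrow> 'a set \<Rightarrow> (('a + 'a) list \<Rightarrow> int) set ring" where
  "univ_loc A T = loc_free A T Quot loc_ideal A T"

definition univ_map :: "('a,'m) ring_scheme \<Rightarrow> 'a set \<Rightarrow> 'a \<Rightarrow> (('a + 'a) list \<Rightarrow> int) set" where
  "univ_map A T a = loc_ideal A T +>\<^bsub>loc_free A T\<^esub> letter (Inl a)"

definition univ_x :: "('a,'m) ring_scheme \<Rightarrow> 'a set \<Rightarrow> 'a \<Rightarrow> (('a + 'a) list \<Rightarrow> int) set" where
  "univ_x A T t = loc_ideal A T +>\<^bsub>loc_free A T\<^esub> letter (Inr t)"

definition ass :: "('a,'m) ring_scheme \<Rightarrow> 'a set \<Rightarrow> 'a set" where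
  "ass A T = {a \<in> carrier A. univ_map A T a = \<zero>\<^bsub>univ_loc A T\<^esub>}"

definition left_localizable :: "('a,'m) ring_scheme \<Rightarrow> 'a set \<Rightarrow> bool" where
  "left_localizable A T \<longleftrightarrow> \<one>\<^bsub>univ_loc A T\<^esub> \<noteq> \<zero>\<^bsub>univ_loc A T\<^esub> \<and>
     (\<forall>u\<in>carrier (univ_loc A T). \<exists>t\<in>T. \<exists>a\<in>carrier A.
        u = univ_x A T t \<otimes>\<^bsub>univ_loc A T\<^esub> univ_map A T a)"

definition is_left_Ore_loc ::
  "('a,'m) ring_scheme \<Rightarrow> 'a set \<Rightarrow> ('c,'n) ring_scheme \<Rightarrow> ('a \<Rightarrow> 'c) \<Rightarrow> bool" where
  "is_left_Ore_loc A T B \<sigma> \<longleftrightarrow> ring B \<and> \<sigma> \<in> ring_hom A B \<and>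
     (\<forall>t\<in>T. \<sigma> t \<in> Units B) \<and>
     (\<forall>b\<in>carrier B. \<exists>t\<in>T. \<exists>a\<in>carrier A. b = inv\<^bsub>B\<^esub> (\<sigma> t) \<otimes>\<^bsub>B\<^esub> \<sigma> a) \<and>
     (\<forall>a\<in>carrier A. \<sigma> a = \<zero>\<^bsub>B\<^esub> \<longleftrightarrow> a \<in> ass_l A T)"

end

(* Because of the almost left Ore condition every element of R<S^-1> is a left fraction x_s r:
   such elements contain the generators and are closed under the ring operations.
   The kernel ass(S) of R -> R<S^-1> is the set of r with s r in 'a(S) for some s in S.
   Indeed 'a(S) is contained in ass(S), since ass(S) is an ideal modulo which S is left regular,
   and s is invertible in R<S^-1>. Conversely, modulo this set the image of S is a left Ore set
   of two-sided regular elements; so the quotient embeds into its ring of left fractions, and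
   by universality this embedding factors through R<S^-1>.
   Hence R<S^-1> is nonzero iff 'a(S) is proper, and then it is the ring of left fractions of
   R/'a(S). Modulo a_r the almost Ore condition becomes the Ore condition, and the universal
   properties give ring maps in both directions between R<S^-1> and (R/a_r)<S_r^-1>. *)

theory Submission
  imports Defs
begin

section \<open>The free ring\<close>

definition splits :: "'y list \<Rightarrow> ('y list \<times> 'y list) set" where
  "splits w = {(u, v). u @ v = w}"

definition splits3 :: "'y list \<Rightarrow> ('y list \<times> 'y list \<times> 'y list) set" where
  "splits3 w = {(x, y, z). x @ y @ z = w}"

lemma splits_eq_image: "splits w = (\<lambda>i. (take i w, drop i w)) ` {..length w}"
proof -
  have "(u, v) \<in> (\<lambda>i. (take i w, drop i w)) ` {..length w}" if "u @ v = w" for u v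
    using that by (intro image_eqI[of _ _ "length u"]) auto
  then show ?thesis unfolding splits_def by auto
qed

lemma finite_splits [simp]: "finite (splits w)"
  by (simp add: splits_eq_image)

lemma sum_splits_fst_splits:
  "(\<Sum>p\<in>splits w. \<Sum>q\<in>splits (fst p). F (fst q) (snd q) (snd p))
     = (\<Sum>(x, y, z)\<in>splits3 w. F x y z)"
proof -
  have "(\<Sum>p\<in>splits w. \<Sum>q\<in>splits (fst p). F (fst q) (snd q) (snd p))
      = (\<Sum>(p, q)\<in>Sigma (splits w) (\<lambda>p. splits (fst p)). F (fst q) (snd q) (snd p))"
    by (rule sum.Sigma) auto
  also have "\<dots> = (\<Sum>(x, y, z)\<in>splits3 w. F x y z)"
    by (rule sum.reindex_bij_witness[where i = "\<lambda>(x, y, z). ((x @ y, z), (x, y))"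
          and j = "\<lambda>(p, q). (fst q, snd q, snd p)"])
       (auto simp: splits_def splits3_def)
  finally show ?thesis .
qed

lemma sum_splits_snd_splits:
  "(\<Sum>p\<in>splits w. \<Sum>q\<in>splits (snd p). F (fst p) (fst q) (snd q))
     = (\<Sum>(x, y, z)\<in>splits3 w. F x y z)"
proof -
  have "(\<Sum>p\<in>splits w. \<Sum>q\<in>splits (snd p). F (fst p) (fst q) (snd q))
      = (\<Sum>(p, q)\<in>Sigma (splits w) (\<lambda>p. splits (snd p)). F (fst p) (fst q) (snd q))"
    by (rule sum.Sigma) auto
  also have "\<dots> = (\<Sum>(x, y, z)\<in>splits3 w. F x y z)"
    by (rule sum.reindex_bij_witness[where i = "\<lambda>(x, y, z). ((x, y @ z), (y, z))"
          and j = "\<lambda>(p, q). (fst p, fst q, snd q)"])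
       (auto simp: splits_def splits3_def)
  finally show ?thesis .
qed

definition word_conv :: "('y list \<Rightarrow> int) \<Rightarrow> ('y list \<Rightarrow> int) \<Rightarrow> 'y list \<Rightarrow> int" where
  "word_conv f g = (\<lambda>w. \<Sum>p\<in>splits w. f (fst p) * g (snd p))"

lemma word_conv_assoc: "word_conv (word_conv f g) h = word_conv f (word_conv g h)"
proof
  fix w
  have "word_conv (word_conv f g) h w
      = (\<Sum>p\<in>splits w. \<Sum>q\<in>splits (fst p). f (fst q) * g (snd q) * h (snd p))"
    by (simp add: word_conv_def sum_distrib_right)
  also have "\<dots> = (\<Sum>(x, y, z)\<in>splits3 w. f x * g y * h z)"
    by (rule sum_splits_fst_splits)
  also have "\<dots> = (\<Sum>p\<in>splits w. \<Sum>q\<in>splits (snd p). f (fst p) * g (fst q) * h (snd q))"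
    by (rule sum_splits_snd_splits[symmetric])
  also have "\<dots> = word_conv f (word_conv g h) w"
    by (simp add: word_conv_def sum_distrib_left mult.assoc)
  finally show "word_conv (word_conv f g) h w = word_conv f (word_conv g h) w" .
qed

lemma word_conv_one_left: "word_conv (\<lambda>w. if w = [] then 1 else 0) g = g"
proof
  fix w
  have "word_conv (\<lambda>w. if w = [] then 1 else 0) g w = (\<Sum>p\<in>splits w. if p = ([], w) then g w else 0)"
    unfolding word_conv_def by (rule sum.cong) (auto simp: splits_def)
  also have "\<dots> = g w" by (simp add: sum.delta) (simp add: splits_def)
  finally show "word_conv (\<lambda>w. if w = [] then 1 else 0) g w = g w" .
qed

lemma word_conv_one_right: "word_conv g (\<lambda>w. if w = [] then 1 else 0) = g"
proof
  fix w
  have "word_conv g (\<lambda>w. if w = [] then 1 else 0) w = (\<Sum>p\<in>splits w. if p = (w, []) then g w else 0)"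
    unfolding word_conv_def by (rule sum.cong) (auto simp: splits_def)
  also have "\<dots> = g w" by (simp add: sum.delta) (simp add: splits_def)
  finally show "word_conv g (\<lambda>w. if w = [] then 1 else 0) w = g w" .
qed

lemma word_conv_support:
  "{w. word_conv f g w \<noteq> 0} \<subseteq> (\<lambda>(u, v). u @ v) ` ({u. f u \<noteq> 0} \<times> {v. g v \<noteq> 0})"
proof
  fix w assume "w \<in> {w. word_conv f g w \<noteq> 0}"
  then obtain p where "p \<in> splits w" "f (fst p) * g (snd p) \<noteq> 0"
    unfolding word_conv_def using sum.not_neutral_contains_not_neutral by blast
  then show "w \<in> (\<lambda>(u, v). u @ v) ` ({u. f u \<noteq> 0} \<times> {v. g v \<noteq> 0})"
    by (intro image_eqI[of _ _ p]) (auto simp: splits_def)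
qed

lemma free_ring_carrier:
  "carrier (free_ring Y) = {f. finite {w. f w \<noteq> 0} \<and> (\<forall>w. f w \<noteq> 0 \<longrightarrow> set w \<subseteq> Y)}"
  by (simp add: free_ring_def)

lemma free_ring_mult: "f \<otimes>\<^bsub>free_ring Y\<^esub> g = word_conv f g"
proof -
  have "(\<Sum>(u, v)\<in>{(u, v). u @ v = w}. f u * g v) = (\<Sum>p\<in>splits w. f (fst p) * g (snd p))" for w
    unfolding splits_def by (rule sum.cong) auto
  then show ?thesis by (auto simp: free_ring_def word_conv_def)
qed

lemma free_ring_add: "f \<oplus>\<^bsub>free_ring Y\<^esub> g = (\<lambda>w. f w + g w)"
  by (simp add: free_ring_def)

lemma free_ring_zero: "\<zero>\<^bsub>free_ring Y\<^esub> = (\<lambda>w. 0)"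
  by (simp add: free_ring_def)

lemma free_ring_one: "\<one>\<^bsub>free_ring Y\<^esub> = (\<lambda>w. if w = [] then 1 else 0)"
  by (simp add: free_ring_def)

lemma free_ring_add_closed:
  assumes "f \<in> carrier (free_ring Y)" and "g \<in> carrier (free_ring Y)"
  shows "f \<oplus>\<^bsub>free_ring Y\<^esub> g \<in> carrier (free_ring Y)"
proof -
  have "{w. f w + g w \<noteq> 0} \<subseteq> {w. f w \<noteq> 0} \<union> {w. g w \<noteq> 0}" by auto
  then show ?thesis
    using assms by (auto simp: free_ring_carrier free_ring_add intro: finite_subset)
qed

lemma free_ring_mult_closed:
  assumes f: "f \<in> carrier (free_ring Y)" and g: "g \<in> carrier (free_ring Y)"
  shows "f \<otimes>\<^bsub>free_ring Y\<^esub> g \<in> carrier (free_ring Y)"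
proof -
  let ?S = "(\<lambda>(u, v). u @ v) ` ({u. f u \<noteq> 0} \<times> {v. g v \<noteq> 0})"
  have "finite ?S" using f g by (simp add: free_ring_carrier)
  moreover have "set w \<subseteq> Y" if "w \<in> ?S" for w
    using that f g by (force simp: free_ring_carrier)
  ultimately show ?thesis
    using word_conv_support[of f g] unfolding free_ring_carrier free_ring_mult
    by (blast intro: finite_subset)
qed

lemma ring_free_ring: "ring (free_ring Y)"
proof (rule ringI)
  show "abelian_group (free_ring Y)"
  proof (rule abelian_groupI)
    fix f assume f: "f \<in> carrier (free_ring Y)"
    show "\<exists>g\<in>carrier (free_ring Y). g \<oplus>\<^bsub>free_ring Y\<^esub> f = \<zero>\<^bsub>free_ring Y\<^esub>"
      using f by (intro bexI[of _ "\<lambda>w. - f w"]) (auto simp: free_ring_carrier free_ring_add free_ring_zero)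
  next
    fix f g assume "f \<in> carrier (free_ring Y)" "g \<in> carrier (free_ring Y)"
    then show "f \<oplus>\<^bsub>free_ring Y\<^esub> g \<in> carrier (free_ring Y)" by (rule free_ring_add_closed)
  qed (simp_all add: free_ring_add free_ring_zero free_ring_carrier algebra_simps)
next
  show "monoid (free_ring Y)"
  proof (rule monoidI)
    fix f g assume "f \<in> carrier (free_ring Y)" "g \<in> carrier (free_ring Y)"
    then show "f \<otimes>\<^bsub>free_ring Y\<^esub> g \<in> carrier (free_ring Y)" by (rule free_ring_mult_closed)
  next
    show "\<one>\<^bsub>free_ring Y\<^esub> \<in> carrier (free_ring Y)"
      by (simp add: free_ring_carrier free_ring_one)
  qed (simp_all only: free_ring_mult free_ring_one word_conv_assoc word_conv_one_left word_conv_one_right)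
qed (simp_all only: free_ring_mult free_ring_add word_conv_def distrib_left distrib_right sum.distrib)

lemma free_ring_uminus:
  assumes "f \<in> carrier (free_ring Y)"
  shows "\<ominus>\<^bsub>free_ring Y\<^esub> f = (\<lambda>w. - f w)"
proof -
  interpret F: ring "free_ring Y" by (rule ring_free_ring)
  have "(\<lambda>w. - f w) \<in> carrier (free_ring Y)" using assms by (simp add: free_ring_carrier)
  moreover have "(\<lambda>w. - f w) \<oplus>\<^bsub>free_ring Y\<^esub> f = \<zero>\<^bsub>free_ring Y\<^esub>"
    by (simp add: free_ring_add free_ring_zero)
  ultimately show ?thesis using F.minus_equality assms by metis
qed

definition free_monom :: "int \<Rightarrow> 'y list \<Rightarrow> 'y list \<Rightarrow> int" where
  "free_monom c w = (\<lambda>v. if v = w then c else 0)"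

lemma free_monom_carrier: "set w \<subseteq> Y \<Longrightarrow> free_monom c w \<in> carrier (free_ring Y)"
  by (auto simp: free_monom_def free_ring_carrier)

lemma letter_carrier: "y \<in> Y \<Longrightarrow> letter y \<in> carrier (free_ring Y)"
  by (auto simp: letter_def free_ring_carrier)

lemma letter_eq_free_monom: "letter y = free_monom 1 [y]"
  by (auto simp: letter_def free_monom_def)

lemma free_ring_one_eq_monom: "\<one>\<^bsub>free_ring Y\<^esub> = free_monom 1 []"
  by (auto simp: free_ring_one free_monom_def)

lemma free_monom_zero: "free_monom 0 w = \<zero>\<^bsub>free_ring Y\<^esub>"
  by (auto simp: free_monom_def free_ring_zero)

lemma free_monom_add: "free_monom a w \<oplus>\<^bsub>free_ring Y\<^esub> free_monom b w = free_monom (a + b) w"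
  by (auto simp: free_monom_def free_ring_add)

lemma free_monom_uminus:
  "set w \<subseteq> Y \<Longrightarrow> \<ominus>\<^bsub>free_ring Y\<^esub> free_monom c w = free_monom (- c) w"
  by (simp add: free_ring_uminus free_monom_carrier) (auto simp: free_monom_def)

lemma free_monom_mult:
  "free_monom a u \<otimes>\<^bsub>free_ring Y\<^esub> free_monom b v = free_monom (a * b) (u @ v)"
proof
  fix w
  have "(\<Sum>p\<in>splits w. free_monom a u (fst p) * free_monom b v (snd p))
      = (\<Sum>p\<in>splits w. if p = (u, v) then a * b else 0)"
    by (rule sum.cong) (auto simp: free_monom_def)
  also have "\<dots> = free_monom (a * b) (u @ v) w"
    by (simp add: sum.delta) (auto simp: free_monom_def splits_def)
  finally show "(free_monom a u \<otimes>\<^bsub>free_ring Y\<^esub> free_monom b v) w = free_monom (a * b) (u @ v) w"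
    by (simp add: free_ring_mult word_conv_def)
qed

lemma free_ring_finsum_apply:
  assumes "finite I" and "h \<in> I \<rightarrow> carrier (free_ring Y)"
  shows "finsum (free_ring Y) h I w = (\<Sum>i\<in>I. h i w)"
  using assms
proof (induction I rule: finite_induct)
  case empty
  interpret F: ring "free_ring Y" by (rule ring_free_ring)
  show ?case by (simp add: free_ring_zero)
next
  case (insert i I)
  interpret F: ring "free_ring Y" by (rule ring_free_ring)
  from insert show ?case by (simp add: F.finsum_insert free_ring_add)
qed

lemma free_ring_sum_monoms:
  assumes "f \<in> carrier (free_ring Y)"
  shows "f = (\<Oplus>\<^bsub>free_ring Y\<^esub>w\<in>{w. f w \<noteq> 0}. free_monom (f w) w)"
proof
  fix v
  have fin: "finite {w. f w \<noteq> 0}" and words: "\<And>w. f w \<noteq> 0 \<Longrightarrow> set w \<subseteq> Y"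
    using assms by (auto simp: free_ring_carrier)
  have "(\<Oplus>\<^bsub>free_ring Y\<^esub>w\<in>{w. f w \<noteq> 0}. free_monom (f w) w) v = (\<Sum>w | f w \<noteq> 0. free_monom (f w) w v)"
    using fin words by (intro free_ring_finsum_apply) (auto intro: free_monom_carrier)
  also have "\<dots> = f v"
    using fin by (simp add: free_monom_def)
  finally show "f v = (\<Oplus>\<^bsub>free_ring Y\<^esub>w\<in>{w. f w \<noteq> 0}. free_monom (f w) w) v" by simp
qed

lemma free_ring_monom_induct [consumes 1, case_names zero monom add]:
  assumes f: "f \<in> carrier (free_ring Y)"
    and zero: "P \<zero>\<^bsub>free_ring Y\<^esub>"
    and monom: "\<And>c w. set w \<subseteq> Y \<Longrightarrow> P (free_monom c w)"
    and add: "\<And>g h. g \<in> carrier (free_ring Y) \<Longrightarrow> h \<in> carrier (free_ring Y) \<Longrightarrow> P g \<Longrightarrow> P h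
                \<Longrightarrow> P (g \<oplus>\<^bsub>free_ring Y\<^esub> h)"
  shows "P f"
proof -
  interpret F: ring "free_ring Y" by (rule ring_free_ring)
  have "finite I \<Longrightarrow> I \<subseteq> {w. f w \<noteq> 0} \<Longrightarrow> P (\<Oplus>\<^bsub>free_ring Y\<^esub>w\<in>I. free_monom (f w) w)" for I
  proof (induction I rule: finite_induct)
    case (insert w I)
    have mono: "set v \<subseteq> Y" if "v \<in> insert w I" for v
      using insert.prems that f by (auto simp: free_ring_carrier)
    then show ?case
      using insert by (simp add: F.finsum_insert free_monom_carrier add monom F.finsum_closed Pi_iff)
  qed (simp add: zero)
  moreover have "finite {w. f w \<noteq> 0}" using f by (simp add: free_ring_carrier)
  ultimately have "P (\<Oplus>\<^bsub>free_ring Y\<^esub>w\<in>{w. f w \<noteq> 0}. free_monom (f w) w)" by blast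
  then show ?thesis by (subst free_ring_sum_monoms[OF f])
qed

lemma free_monom_int_induct:
  assumes w: "set w \<subseteq> Y" and one: "P (free_monom 1 w)"
    and add: "\<And>g h. g \<in> carrier (free_ring Y) \<Longrightarrow> h \<in> carrier (free_ring Y) \<Longrightarrow> P g \<Longrightarrow> P h
                \<Longrightarrow> P (g \<oplus>\<^bsub>free_ring Y\<^esub> h)"
    and uminus: "\<And>g. g \<in> carrier (free_ring Y) \<Longrightarrow> P g \<Longrightarrow> P (\<ominus>\<^bsub>free_ring Y\<^esub> g)"
  shows "P (free_monom c w)"
proof (induction c rule: int_induct[where k = 1])
  case base
  show ?case using one .
next
  case (step1 i)
  then show ?case
    using add[of "free_monom i w" "free_monom 1 w"] one w
    by (simp add: free_monom_add free_monom_carrier)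
next
  case (step2 i)
  have "P (\<ominus>\<^bsub>free_ring Y\<^esub> free_monom 1 w)"
    using uminus one w by (simp add: free_monom_carrier)
  then show ?case
    using step2 add[of "free_monom i w" "\<ominus>\<^bsub>free_ring Y\<^esub> free_monom 1 w"] w
    by (simp add: free_monom_uminus free_monom_add free_monom_carrier)
qed

lemma free_ring_induct [consumes 1, case_names letter one add mult uminus]:
  assumes f: "f \<in> carrier (free_ring Y)"
    and letter: "\<And>y. y \<in> Y \<Longrightarrow> P (letter y)"
    and one: "P \<one>\<^bsub>free_ring Y\<^esub>"
    and add: "\<And>g h. g \<in> carrier (free_ring Y) \<Longrightarrow> h \<in> carrier (free_ring Y) \<Longrightarrow> P g \<Longrightarrow> P h
                \<Longrightarrow> P (g \<oplus>\<^bsub>free_ring Y\<^esub> h)"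
    and mult: "\<And>g h. g \<in> carrier (free_ring Y) \<Longrightarrow> h \<in> carrier (free_ring Y) \<Longrightarrow> P g \<Longrightarrow> P h
                \<Longrightarrow> P (g \<otimes>\<^bsub>free_ring Y\<^esub> h)"
    and uminus: "\<And>g. g \<in> carrier (free_ring Y) \<Longrightarrow> P g \<Longrightarrow> P (\<ominus>\<^bsub>free_ring Y\<^esub> g)"
  shows "P f"
proof -
  have word: "P (free_monom 1 w)" if "set w \<subseteq> Y" for w
    using that
  proof (induction w)
    case Nil
    then show ?case using one by (simp add: free_ring_one_eq_monom)
  next
    case (Cons y w)
    have "free_monom 1 (y # w) = letter y \<otimes>\<^bsub>free_ring Y\<^esub> free_monom 1 w"
      by (simp add: letter_eq_free_monom free_monom_mult)
    then show ?case
      using Cons by (simp add: mult letter letter_carrier free_monom_carrier)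
  qed
  have monom: "P (free_monom c w)" if "set w \<subseteq> Y" for c w
    using that word[OF that] add uminus by (rule free_monom_int_induct)
  have zero: "P \<zero>\<^bsub>free_ring Y\<^esub>"
    using monom[of "[]" 0] by (simp add: free_monom_zero[where Y = Y])
  show ?thesis
    using f by (induction rule: free_ring_monom_induct) (simp_all add: zero monom add)
qed

definition word_prod :: "('b, 'n) ring_scheme \<Rightarrow> ('y \<Rightarrow> 'b) \<Rightarrow> 'y list \<Rightarrow> 'b" where
  "word_prod B \<phi> w = foldr (\<lambda>y x. \<phi> y \<otimes>\<^bsub>B\<^esub> x) w \<one>\<^bsub>B\<^esub>"

definition free_eval :: "('b, 'n) ring_scheme \<Rightarrow> ('y \<Rightarrow> 'b) \<Rightarrow> ('y list \<Rightarrow> int) \<Rightarrow> 'b" where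
  "free_eval B \<phi> f = (\<Oplus>\<^bsub>B\<^esub>w\<in>{w. f w \<noteq> 0}. [f w] \<cdot>\<^bsub>B\<^esub> word_prod B \<phi> w)"

lemma (in ring) add_pow_int_mult:
  assumes "x \<in> carrier R" "y \<in> carrier R"
  shows "[(a * b :: int)] \<cdot> (x \<otimes> y) = ([a] \<cdot> x) \<otimes> ([b] \<cdot> y)"
proof -
  have "([a] \<cdot> x) \<otimes> ([b] \<cdot> y) = [a] \<cdot> (x \<otimes> ([b] \<cdot> y))"
    using assms by (simp add: add_pow_ldistr_int)
  also have "\<dots> = [a] \<cdot> ([b] \<cdot> (x \<otimes> y))"
    using assms by (simp add: add_pow_rdistr_int)
  also have "\<dots> = [(a * b)] \<cdot> (x \<otimes> y)"
    using assms by (simp add: add.int_pow_pow mult.commute)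
  finally show ?thesis by simp
qed

locale free_ring_eval = ring B for B :: "('b, 'n) ring_scheme" (structure) +
  fixes Y :: "'y set" and \<phi> :: "'y \<Rightarrow> 'b"
  assumes \<phi>_closed: "y \<in> Y \<Longrightarrow> \<phi> y \<in> carrier B"
begin

lemma word_prod_closed: "set w \<subseteq> Y \<Longrightarrow> word_prod B \<phi> w \<in> carrier B"
  by (induction w) (auto simp: word_prod_def \<phi>_closed)

lemma word_prod_append:
  "set u \<subseteq> Y \<Longrightarrow> set v \<subseteq> Y \<Longrightarrow> word_prod B \<phi> (u @ v) = word_prod B \<phi> u \<otimes> word_prod B \<phi> v"
proof (induction u)
  case Nil
  then show ?case by (simp add: word_prod_def word_prod_closed[unfolded word_prod_def])
next
  case (Cons y u)
  then show ?case
    by (simp add: word_prod_def m_assoc \<phi>_closed word_prod_closed[unfolded word_prod_def])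
qed

lemma free_eval_eq_sum:
  assumes "finite W" "{w. f w \<noteq> 0} \<subseteq> W" "\<And>w. w \<in> W \<Longrightarrow> set w \<subseteq> Y"
  shows "free_eval B \<phi> f = (\<Oplus>w\<in>W. [f w] \<cdot> word_prod B \<phi> w)"
proof -
  have "[(0::int)] \<cdot> x = \<zero>" for x by (simp add: add_pow_def)
  then show ?thesis
    unfolding free_eval_def
    by (intro add.finprod_mono_neutral_cong_left) (use assms word_prod_closed in auto)
qed

lemma free_eval_closed: "f \<in> carrier (free_ring Y) \<Longrightarrow> free_eval B \<phi> f \<in> carrier B"
  unfolding free_eval_def by (rule finsum_closed) (auto simp: free_ring_carrier word_prod_closed)

lemma free_eval_zero: "free_eval B \<phi> \<zero>\<^bsub>free_ring Y\<^esub> = \<zero>"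
  by (simp add: free_eval_def free_ring_zero)

lemma free_eval_add:
  assumes f: "f \<in> carrier (free_ring Y)" and g: "g \<in> carrier (free_ring Y)"
  shows "free_eval B \<phi> (f \<oplus>\<^bsub>free_ring Y\<^esub> g) = free_eval B \<phi> f \<oplus> free_eval B \<phi> g"
proof -
  let ?W = "{w. f w \<noteq> 0} \<union> {w. g w \<noteq> 0}"
  have fin: "finite ?W" and words: "\<And>w. w \<in> ?W \<Longrightarrow> set w \<subseteq> Y"
    using f g by (auto simp: free_ring_carrier)
  have "free_eval B \<phi> (f \<oplus>\<^bsub>free_ring Y\<^esub> g) = (\<Oplus>w\<in>?W. [(f w + g w)] \<cdot> word_prod B \<phi> w)"
    unfolding free_ring_add by (rule free_eval_eq_sum) (use fin words in auto)
  also have "\<dots> = (\<Oplus>w\<in>?W. [f w] \<cdot> word_prod B \<phi> w \<oplus> [g w] \<cdot> word_prod B \<phi> w)"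
    by (rule add.finprod_cong') (auto simp: add.int_pow_mult words word_prod_closed)
  also have "\<dots> = (\<Oplus>w\<in>?W. [f w] \<cdot> word_prod B \<phi> w) \<oplus> (\<Oplus>w\<in>?W. [g w] \<cdot> word_prod B \<phi> w)"
    by (rule add.finprod_multf) (auto simp: words word_prod_closed)
  also have "\<dots> = free_eval B \<phi> f \<oplus> free_eval B \<phi> g"
    using free_eval_eq_sum[of ?W f] free_eval_eq_sum[of ?W g] fin words by auto
  finally show ?thesis .
qed

lemma free_eval_monom:
  assumes "set w \<subseteq> Y"
  shows "free_eval B \<phi> (free_monom c w) = [c] \<cdot> word_prod B \<phi> w"
proof -
  have "free_eval B \<phi> (free_monom c w) = (\<Oplus>v\<in>{w}. [free_monom c w v] \<cdot> word_prod B \<phi> v)"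
    by (rule free_eval_eq_sum) (use assms in \<open>auto simp: free_monom_def\<close>)
  then show ?thesis using assms word_prod_closed by (simp add: free_monom_def)
qed

lemma free_eval_monom_mult:
  assumes u: "set u \<subseteq> Y" and h: "h \<in> carrier (free_ring Y)"
  shows "free_eval B \<phi> (free_monom c u \<otimes>\<^bsub>free_ring Y\<^esub> h) = free_eval B \<phi> (free_monom c u) \<otimes> free_eval B \<phi> h"
  using h
proof (induction rule: free_ring_monom_induct)
  case zero
  interpret F: ring "free_ring Y" by (rule ring_free_ring)
  show ?case
    using u by (simp add: free_eval_zero free_monom_carrier free_eval_closed)
next
  case (monom d v)
  then show ?case
    using u by (simp add: free_monom_mult free_eval_monom word_prod_append word_prod_closed add_pow_int_mult)
next
  case (add h1 h2)
  interpret F: ring "free_ring Y" by (rule ring_free_ring)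
  from add show ?case
    using u by (simp add: F.r_distr free_monom_carrier free_eval_add r_distr free_eval_closed)
qed

lemma free_eval_mult:
  assumes f: "f \<in> carrier (free_ring Y)" and g: "g \<in> carrier (free_ring Y)"
  shows "free_eval B \<phi> (f \<otimes>\<^bsub>free_ring Y\<^esub> g) = free_eval B \<phi> f \<otimes> free_eval B \<phi> g"
  using f
proof (induction rule: free_ring_monom_induct)
  case zero
  interpret F: ring "free_ring Y" by (rule ring_free_ring)
  show ?case using g by (simp add: free_eval_zero free_eval_closed)
next
  case (monom c u)
  then show ?case using g by (rule free_eval_monom_mult)
next
  case (add f1 f2)
  interpret F: ring "free_ring Y" by (rule ring_free_ring)
  from add show ?case using g by (simp add: F.l_distr free_eval_add l_distr free_eval_closed)
qed

lemma free_eval_one: "free_eval B \<phi> \<one>\<^bsub>free_ring Y\<^esub> = \<one>"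
  by (simp add: free_ring_one_eq_monom free_eval_monom word_prod_def)

lemma free_eval_letter: "y \<in> Y \<Longrightarrow> free_eval B \<phi> (letter y) = \<phi> y"
  by (simp add: letter_eq_free_monom free_eval_monom word_prod_def \<phi>_closed)

lemma free_eval_hom: "free_eval B \<phi> \<in> ring_hom (free_ring Y) B"
  by (rule ring_hom_memI) (simp_all add: free_eval_closed free_eval_mult free_eval_add free_eval_one)

end

context ideal
begin

lemma FactRing_elemE:
  assumes "P \<in> carrier (R Quot I)"
  obtains x where "x \<in> carrier R" "P = I +> x"
  using assms unfolding FactRing_def A_RCOSETS_def' by auto

lemma rcos_eq_iff: "x \<in> carrier R \<Longrightarrow> y \<in> carrier R \<Longrightarrow> I +> x = I +> y \<longleftrightarrow> x \<ominus> y \<in> I"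
  using quotient_eq_iff_same_a_r_cos[OF ideal_axioms] by simp

lemma rcos_eq_zero_iff: "x \<in> carrier R \<Longrightarrow> I +> x = \<zero>\<^bsub>R Quot I\<^esub> \<longleftrightarrow> x \<in> I"
  using rcos_eq_iff[of x \<zero>] a_rcos_zero[OF ideal_axioms] by (simp add: FactRing_def minus_eq)

lemma rcos_mult: "x \<in> carrier R \<Longrightarrow> y \<in> carrier R \<Longrightarrow> (I +> x) \<otimes>\<^bsub>R Quot I\<^esub> (I +> y) = I +> (x \<otimes> y)"
  using ring_hom_mult[OF rcos_ring_hom] by simp

lemma FactRing_cancel_right:
  assumes cancel: "\<And>x. x \<in> carrier R \<Longrightarrow> x \<otimes> t \<in> I \<Longrightarrow> x \<in> I" and t: "t \<in> carrier R"
    and P: "P \<in> carrier (R Quot I)" and eq: "P \<otimes>\<^bsub>R Quot I\<^esub> (I +> t) = \<zero>\<^bsub>R Quot I\<^esub>"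
  shows "P = \<zero>\<^bsub>R Quot I\<^esub>"
proof -
  obtain x where x: "x \<in> carrier R" "P = I +> x" using P by (rule FactRing_elemE)
  then show ?thesis using eq cancel[OF x(1)] t by (simp add: rcos_mult rcos_eq_zero_iff)
qed

lemma FactRing_cancel_left:
  assumes cancel: "\<And>x. x \<in> carrier R \<Longrightarrow> t \<otimes> x \<in> I \<Longrightarrow> x \<in> I" and t: "t \<in> carrier R"
    and P: "P \<in> carrier (R Quot I)" and eq: "(I +> t) \<otimes>\<^bsub>R Quot I\<^esub> P = \<zero>\<^bsub>R Quot I\<^esub>"
  shows "P = \<zero>\<^bsub>R Quot I\<^esub>"
proof -
  obtain x where x: "x \<in> carrier R" "P = I +> x" using P by (rule FactRing_elemE)
  then show ?thesis using eq cancel[OF x(1)] t by (simp add: rcos_mult rcos_eq_zero_iff)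
qed

lemma left_Ore_set_FactRing:
  assumes T: "T \<subseteq> carrier R" "\<one> \<in> T" "\<And>s t. s \<in> T \<Longrightarrow> t \<in> T \<Longrightarrow> s \<otimes> t \<in> T"
    and Ore: "\<And>s r. s \<in> T \<Longrightarrow> r \<in> carrier R \<Longrightarrow> \<exists>s1\<in>T. \<exists>r1\<in>carrier R. s1 \<otimes> r \<ominus> r1 \<otimes> s \<in> I"
  shows "left_Ore_set (R Quot I) ((+>) I ` T)"
proof -
  have "\<exists>s'\<in>(+>) I ` T. \<exists>r'\<in>carrier (R Quot I). s' \<otimes>\<^bsub>R Quot I\<^esub> P = r' \<otimes>\<^bsub>R Quot I\<^esub> Q"
    if P: "P \<in> carrier (R Quot I)" and Q: "Q \<in> (+>) I ` T" for P Q
  proof -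
    obtain r where r: "r \<in> carrier R" "P = I +> r" using P by (rule FactRing_elemE)
    obtain s where s: "s \<in> T" "Q = I +> s" using Q by blast
    obtain s1 r1 where s1: "s1 \<in> T" and r1: "r1 \<in> carrier R" and d: "s1 \<otimes> r \<ominus> r1 \<otimes> s \<in> I"
      using Ore[OF s(1) r(1)] by blast
    have carr: "s \<in> carrier R" "s1 \<in> carrier R" using s s1 T(1) by auto
    have "I +> (s1 \<otimes> r) = I +> (r1 \<otimes> s)"
      using d carr r1 r by (subst rcos_eq_iff) auto
    then have "(I +> s1) \<otimes>\<^bsub>R Quot I\<^esub> P = (I +> r1) \<otimes>\<^bsub>R Quot I\<^esub> Q"
      using r s carr r1 by (simp add: rcos_mult)
    then show ?thesis
      using s1 ring_hom_closed[OF rcos_ring_hom r1] by blast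
  qed
  moreover have "(I +> s) \<otimes>\<^bsub>R Quot I\<^esub> (I +> t) \<in> (+>) I ` T" if "s \<in> T" "t \<in> T" for s t
    using that T subsetD[OF T(1)] by (simp add: rcos_mult)
  ultimately show ?thesis
    unfolding left_Ore_set_def
    using ring_hom_closed[OF rcos_ring_hom] ring_hom_one[OF rcos_ring_hom] T(1,2)
    by (auto intro!: image_eqI)
qed

lemma FactRing_lift:
  assumes "ring S" and h: "h \<in> ring_hom R S" and kernel: "\<And>x. x \<in> I \<Longrightarrow> h x = \<zero>\<^bsub>S\<^esub>"
  obtains g where "g \<in> ring_hom (R Quot I) S" and "\<And>x. x \<in> carrier R \<Longrightarrow> g (I +> x) = h x"
proof -
  interpret h: ring_hom_ring R S h using ring_axioms assms(1) h by (rule ring_hom_ringI2)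
  have image: "h ` (I +> x) = {h x}" if x: "x \<in> carrier R" for x
  proof -
    have "h (i \<oplus> x) = h x" if "i \<in> I" for i
      using that x kernel by simp
    then show ?thesis using x by (auto simp: a_r_coset_def' intro!: image_eqI[of _ _ "\<zero> \<oplus> x"])
  qed
  define g where "g P = the_elem (h ` P)" for P
  have g: "g (I +> x) = h x" if "x \<in> carrier R" for x
    using image[OF that] by (simp add: g_def)
  have "g \<in> ring_hom (R Quot I) S"
  proof (rule ring_hom_memI)
    fix P assume "P \<in> carrier (R Quot I)"
    then show "g P \<in> carrier S" by (elim FactRing_elemE) (simp add: g)
  next
    fix P Q assume "P \<in> carrier (R Quot I)" "Q \<in> carrier (R Quot I)"
    then obtain x y where "x \<in> carrier R" "P = I +> x" "y \<in> carrier R" "Q = I +> y"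
      by (metis FactRing_elemE)
    then show "g (P \<otimes>\<^bsub>R Quot I\<^esub> Q) = g P \<otimes>\<^bsub>S\<^esub> g Q" and "g (P \<oplus>\<^bsub>R Quot I\<^esub> Q) = g P \<oplus>\<^bsub>S\<^esub> g Q"
      using ring_hom_add[OF rcos_ring_hom, symmetric] by (simp_all add: rcos_mult g)
  next
    show "g \<one>\<^bsub>R Quot I\<^esub> = \<one>\<^bsub>S\<^esub>"
      using ring_hom_one[OF rcos_ring_hom] g[of \<one>] by simp
  qed
  with g show ?thesis using that by blast
qed

end

section \<open>The universal localization\<close>

definition loc_eval :: "('b, 'n) ring_scheme \<Rightarrow> ('a \<Rightarrow> 'b) \<Rightarrow> (('a + 'a) list \<Rightarrow> int) \<Rightarrow> 'b" where
  "loc_eval B f = free_eval B (case_sum f (\<lambda>t. inv\<^bsub>B\<^esub> (f t)))"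

locale univ_localization = ring A for A :: "('a, 'm) ring_scheme" (structure) +
  fixes T :: "'a set"
  assumes T_subset: "T \<subseteq> carrier A"
begin

abbreviation "FL \<equiv> loc_free A T"
abbreviation "IL \<equiv> loc_ideal A T"
abbreviation "U \<equiv> univ_loc A T"
abbreviation "\<iota> \<equiv> univ_map A T"
abbreviation "\<xi> \<equiv> univ_x A T"

lemma T_carrier: "t \<in> T \<Longrightarrow> t \<in> carrier A"
  using T_subset by auto

lemma letter_Inl_carrier: "a \<in> carrier A \<Longrightarrow> letter (Inl a) \<in> carrier FL"
  by (simp add: letter_carrier loc_alphabet_def)

lemma letter_Inr_carrier: "t \<in> T \<Longrightarrow> letter (Inr t) \<in> carrier FL"
  by (simp add: letter_carrier loc_alphabet_def)

lemma loc_rels_subset: "loc_rels A T \<subseteq> carrier FL"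
proof -
  interpret F: ring FL by (rule ring_free_ring)
  show ?thesis
    unfolding loc_rels_def using T_carrier by (auto intro!: letter_Inl_carrier letter_Inr_carrier)
qed

lemma ideal_loc_ideal: "ideal IL FL"
  unfolding loc_ideal_def by (rule ring.genideal_ideal[OF ring_free_ring loc_rels_subset])

lemma ring_univ_loc: "ring U"
  unfolding univ_loc_def by (rule ideal.quotient_is_ring[OF ideal_loc_ideal])

lemma loc_proj_hom: "(+>\<^bsub>FL\<^esub>) IL \<in> ring_hom FL U"
  unfolding univ_loc_def by (rule ideal.rcos_ring_hom[OF ideal_loc_ideal])

lemma loc_proj_rel:
  assumes "p \<in> carrier FL" "q \<in> carrier FL" "p \<ominus>\<^bsub>FL\<^esub> q \<in> loc_rels A T"
  shows "IL +>\<^bsub>FL\<^esub> p = IL +>\<^bsub>FL\<^esub> q"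
proof -
  have "p \<ominus>\<^bsub>FL\<^esub> q \<in> IL"
    using assms(3) ring.genideal_self[OF ring_free_ring loc_rels_subset] by (auto simp: loc_ideal_def)
  then show ?thesis using ideal.rcos_eq_iff[OF ideal_loc_ideal] assms(1,2) by blast
qed

lemma univ_map_closed: "a \<in> carrier A \<Longrightarrow> \<iota> a \<in> carrier U"
  unfolding univ_map_def by (rule ring_hom_closed[OF loc_proj_hom letter_Inl_carrier])

lemma univ_x_closed: "t \<in> T \<Longrightarrow> \<xi> t \<in> carrier U"
  unfolding univ_x_def by (rule ring_hom_closed[OF loc_proj_hom letter_Inr_carrier])

lemma univ_map_hom: "\<iota> \<in> ring_hom A U"
proof -
  interpret F: ring FL by (rule ring_free_ring)
  note proj = ring_hom_mult[OF loc_proj_hom] ring_hom_add[OF loc_proj_hom] ring_hom_one[OF loc_proj_hom]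
  show ?thesis
  proof (rule ring_hom_memI)
    fix x y assume xy: "x \<in> carrier A" "y \<in> carrier A"
    have "IL +>\<^bsub>FL\<^esub> letter (Inl (x \<otimes> y)) = IL +>\<^bsub>FL\<^esub> (letter (Inl x) \<otimes>\<^bsub>FL\<^esub> letter (Inl y))"
      using xy by (intro loc_proj_rel) (auto simp: loc_rels_def letter_Inl_carrier)
    then show "\<iota> (x \<otimes> y) = \<iota> x \<otimes>\<^bsub>U\<^esub> \<iota> y"
      using xy by (simp add: univ_map_def proj letter_Inl_carrier)
    have "IL +>\<^bsub>FL\<^esub> letter (Inl (x \<oplus> y)) = IL +>\<^bsub>FL\<^esub> (letter (Inl x) \<oplus>\<^bsub>FL\<^esub> letter (Inl y))"
      using xy by (intro loc_proj_rel) (auto simp: loc_rels_def letter_Inl_carrier)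
    then show "\<iota> (x \<oplus> y) = \<iota> x \<oplus>\<^bsub>U\<^esub> \<iota> y"
      using xy by (simp add: univ_map_def proj letter_Inl_carrier)
  next
    have "IL +>\<^bsub>FL\<^esub> letter (Inl \<one>) = IL +>\<^bsub>FL\<^esub> \<one>\<^bsub>FL\<^esub>"
      by (intro loc_proj_rel) (auto simp: loc_rels_def letter_Inl_carrier)
    then show "\<iota> \<one> = \<one>\<^bsub>U\<^esub>"
      by (simp add: univ_map_def proj)
  qed (rule univ_map_closed)
qed

lemma univ_map_x_inverse:
  assumes t: "t \<in> T"
  shows "\<iota> t \<otimes>\<^bsub>U\<^esub> \<xi> t = \<one>\<^bsub>U\<^esub>"
    and "\<xi> t \<otimes>\<^bsub>U\<^esub> \<iota> t = \<one>\<^bsub>U\<^esub>"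
proof -
  interpret F: ring FL by (rule ring_free_ring)
  note carr = letter_Inl_carrier[OF T_carrier[OF t]] letter_Inr_carrier[OF t]
  note proj = ring_hom_mult[OF loc_proj_hom] ring_hom_one[OF loc_proj_hom]
  have "IL +>\<^bsub>FL\<^esub> (letter (Inl t) \<otimes>\<^bsub>FL\<^esub> letter (Inr t)) = IL +>\<^bsub>FL\<^esub> \<one>\<^bsub>FL\<^esub>"
    using t carr by (intro loc_proj_rel) (auto simp: loc_rels_def)
  then show "\<iota> t \<otimes>\<^bsub>U\<^esub> \<xi> t = \<one>\<^bsub>U\<^esub>"
    using carr by (simp add: univ_map_def univ_x_def proj)
  have "IL +>\<^bsub>FL\<^esub> (letter (Inr t) \<otimes>\<^bsub>FL\<^esub> letter (Inl t)) = IL +>\<^bsub>FL\<^esub> \<one>\<^bsub>FL\<^esub>"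
    using t carr by (intro loc_proj_rel) (auto simp: loc_rels_def)
  then show "\<xi> t \<otimes>\<^bsub>U\<^esub> \<iota> t = \<one>\<^bsub>U\<^esub>"
    using carr by (simp add: univ_map_def univ_x_def proj)
qed

lemma univ_map_Units: "t \<in> T \<Longrightarrow> \<iota> t \<in> Units U"
  unfolding Units_def using univ_map_x_inverse univ_map_closed[OF T_carrier] univ_x_closed by blast

context
  fixes B :: "('b, 'n) ring_scheme" and f :: "'a \<Rightarrow> 'b"
  assumes B: "ring B" and f: "f \<in> ring_hom A B" and units: "\<And>t. t \<in> T \<Longrightarrow> f t \<in> Units B"
begin

lemma free_ring_eval_loc: "free_ring_eval B (loc_alphabet A T) (case_sum f (\<lambda>t. inv\<^bsub>B\<^esub> (f t)))"
proof -
  interpret B: ring B by (rule B)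
  show ?thesis
    by unfold_locales (auto simp: loc_alphabet_def units ring_hom_closed[OF f])
qed

lemma loc_eval_hom: "loc_eval B f \<in> ring_hom FL B"
  unfolding loc_eval_def by (rule free_ring_eval.free_eval_hom[OF free_ring_eval_loc])

lemma loc_eval_Inl: "a \<in> carrier A \<Longrightarrow> loc_eval B f (letter (Inl a)) = f a"
  using free_ring_eval.free_eval_letter[OF free_ring_eval_loc, of "Inl a"]
  by (simp add: loc_eval_def loc_alphabet_def)

lemma loc_eval_Inr: "t \<in> T \<Longrightarrow> loc_eval B f (letter (Inr t)) = inv\<^bsub>B\<^esub> (f t)"
  using free_ring_eval.free_eval_letter[OF free_ring_eval_loc, of "Inr t"]
  by (simp add: loc_eval_def loc_alphabet_def)

lemma loc_eval_loc_rels: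
  assumes "r \<in> loc_rels A T"
  shows "loc_eval B f r = \<zero>\<^bsub>B\<^esub>"
proof -
  interpret B: ring B by (rule B)
  interpret F: ring FL by (rule ring_free_ring)
  interpret f: ring_hom_ring A B f using ring_axioms B f by (rule ring_hom_ringI2)
  interpret h: ring_hom_ring FL B "loc_eval B f"
    using F.ring_axioms B loc_eval_hom by (rule ring_hom_ringI2)
  have minus: "loc_eval B f (p \<ominus>\<^bsub>FL\<^esub> q) = \<zero>\<^bsub>B\<^esub>"
    if "p \<in> carrier FL" "q \<in> carrier FL" "loc_eval B f p = loc_eval B f q" for p q
    using that by (simp add: F.minus_eq B.r_neg)
  from assms consider
      (add) a b where "a \<in> carrier A" "b \<in> carrier A"
        "r = letter (Inl (a \<oplus> b)) \<ominus>\<^bsub>FL\<^esub> (letter (Inl a) \<oplus>\<^bsub>FL\<^esub> letter (Inl b))"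
    | (mult) a b where "a \<in> carrier A" "b \<in> carrier A"
        "r = letter (Inl (a \<otimes> b)) \<ominus>\<^bsub>FL\<^esub> (letter (Inl a) \<otimes>\<^bsub>FL\<^esub> letter (Inl b))"
    | (one) "r = letter (Inl \<one>) \<ominus>\<^bsub>FL\<^esub> \<one>\<^bsub>FL\<^esub>"
    | (inv_right) t where "t \<in> T" "r = letter (Inl t) \<otimes>\<^bsub>FL\<^esub> letter (Inr t) \<ominus>\<^bsub>FL\<^esub> \<one>\<^bsub>FL\<^esub>"
    | (inv_left) t where "t \<in> T" "r = letter (Inr t) \<otimes>\<^bsub>FL\<^esub> letter (Inl t) \<ominus>\<^bsub>FL\<^esub> \<one>\<^bsub>FL\<^esub>"
    unfolding loc_rels_def by blast
  then show ?thesis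
    by cases (simp_all add: minus letter_Inl_carrier letter_Inr_carrier loc_eval_Inl loc_eval_Inr units T_carrier)
qed

lemma univ_map_lift:
  obtains g where "g \<in> ring_hom U B" "\<And>a. a \<in> carrier A \<Longrightarrow> g (\<iota> a) = f a"
    "\<And>t. t \<in> T \<Longrightarrow> g (\<xi> t) = inv\<^bsub>B\<^esub> (f t)"
proof -
  interpret F: ring FL by (rule ring_free_ring)
  interpret h: ring_hom_ring FL B "loc_eval B f"
    using F.ring_axioms B loc_eval_hom by (rule ring_hom_ringI2)
  have "loc_rels A T \<subseteq> a_kernel FL B (loc_eval B f)"
    using loc_rels_subset loc_eval_loc_rels unfolding a_kernel_def' by blast
  then have "IL \<subseteq> a_kernel FL B (loc_eval B f)"
    unfolding loc_ideal_def by (rule F.genideal_minimal[OF h.kernel_is_ideal])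
  then obtain g where g: "g \<in> ring_hom U B" "\<And>x. x \<in> carrier FL \<Longrightarrow> g (IL +>\<^bsub>FL\<^esub> x) = loc_eval B f x"
    using ideal.FactRing_lift[OF ideal_loc_ideal B loc_eval_hom] unfolding univ_loc_def a_kernel_def'
    by blast
  show ?thesis
    using that g loc_eval_Inl loc_eval_Inr
    by (simp add: univ_map_def univ_x_def letter_Inl_carrier letter_Inr_carrier)
qed

end

end

context univ_localization
begin

lemma inv_univ_map: "t \<in> T \<Longrightarrow> inv\<^bsub>U\<^esub> (\<iota> t) = \<xi> t"
  using monoid.inv_unique'[OF ring.is_monoid[OF ring_univ_loc]]
    univ_map_closed[OF T_carrier] univ_x_closed univ_map_x_inverse
  by metis

lemma univ_map_mult_right_eq_zero:
  assumes "a \<in> carrier A" "t \<in> T"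
  shows "\<iota> (a \<otimes> t) = \<zero>\<^bsub>U\<^esub> \<longleftrightarrow> \<iota> a = \<zero>\<^bsub>U\<^esub>"
proof -
  interpret U: ring U by (rule ring_univ_loc)
  note closed = univ_map_closed[OF assms(1)] univ_map_closed[OF T_carrier[OF assms(2)]] univ_x_closed[OF assms(2)]
  have "\<iota> a = \<iota> (a \<otimes> t) \<otimes>\<^bsub>U\<^esub> \<xi> t"
    using assms closed univ_map_x_inverse(1)[OF assms(2)]
    by (simp add: ring_hom_mult[OF univ_map_hom] T_carrier U.m_assoc)
  then show ?thesis
    using assms closed by (auto simp: ring_hom_mult[OF univ_map_hom] T_carrier)
qed

lemma univ_map_mult_left_eq_zero:
  assumes "a \<in> carrier A" "t \<in> T"
  shows "\<iota> (t \<otimes> a) = \<zero>\<^bsub>U\<^esub> \<longleftrightarrow> \<iota> a = \<zero>\<^bsub>U\<^esub>"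
proof -
  interpret U: ring U by (rule ring_univ_loc)
  note closed = univ_map_closed[OF assms(1)] univ_map_closed[OF T_carrier[OF assms(2)]] univ_x_closed[OF assms(2)]
  have "\<iota> a = \<xi> t \<otimes>\<^bsub>U\<^esub> \<iota> (t \<otimes> a)"
    using assms closed univ_map_x_inverse(2)[OF assms(2)]
    by (simp add: ring_hom_mult[OF univ_map_hom] T_carrier U.m_assoc[symmetric])
  then show ?thesis
    using assms closed by (auto simp: ring_hom_mult[OF univ_map_hom] T_carrier)
qed

end

section \<open>Left fractions in the universal localization\<close>

text \<open>Unlike \<^const>\<open>almost_left_Ore\<close>, the locale allows \<open>\<zero> \<in> T\<close>: this is needed because the
  image of \<open>T\<close> in a quotient ring may contain \<open>\<zero>\<close>.\<close>

locale almost_Ore_set = univ_localization +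
  assumes one_mem: "\<one> \<in> T"
    and mult_mem: "s \<in> T \<Longrightarrow> t \<in> T \<Longrightarrow> s \<otimes> t \<in> T"
    and almost_Ore: "s \<in> T \<Longrightarrow> r \<in> carrier A \<Longrightarrow>
        \<exists>s1\<in>T. \<exists>s2\<in>T. \<exists>r1\<in>carrier A. (s1 \<otimes> r \<ominus> r1 \<otimes> s) \<otimes> s2 = \<zero>"

lemma almost_left_Ore_imp_almost_Ore_set:
  assumes "ring R" "almost_left_Ore R S"
  shows "almost_Ore_set R S"
  using assms unfolding almost_left_Ore_def multiplicative_set_def
  by (intro almost_Ore_set.intro univ_localization.intro univ_localization_axioms.intro
      almost_Ore_set_axioms.intro) auto

lemma left_Ore_set_imp_almost_Ore_set:
  assumes "ring R" "left_Ore_set R S"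
  shows "almost_Ore_set R S"
proof -
  interpret R: ring R by fact
  show ?thesis
  proof (intro almost_Ore_set.intro univ_localization.intro univ_localization_axioms.intro
      almost_Ore_set_axioms.intro assms(1))
    fix s r assume s: "s \<in> S" and r: "r \<in> carrier R"
    obtain s' r' where s': "s' \<in> S" and r': "r' \<in> carrier R" and eq: "s' \<otimes>\<^bsub>R\<^esub> r = r' \<otimes>\<^bsub>R\<^esub> s"
      using assms(2) s r unfolding left_Ore_set_def by blast
    have "(s' \<otimes>\<^bsub>R\<^esub> r \<ominus>\<^bsub>R\<^esub> r' \<otimes>\<^bsub>R\<^esub> s) \<otimes>\<^bsub>R\<^esub> \<one>\<^bsub>R\<^esub> = \<zero>\<^bsub>R\<^esub>"
      using s r r' assms(2) unfolding eq left_Ore_set_def by (auto simp: R.r_right_minus_eq)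
    then show "\<exists>s1\<in>S. \<exists>s2\<in>S. \<exists>r1\<in>carrier R. (s1 \<otimes>\<^bsub>R\<^esub> r \<ominus>\<^bsub>R\<^esub> r1 \<otimes>\<^bsub>R\<^esub> s) \<otimes>\<^bsub>R\<^esub> s2 = \<zero>\<^bsub>R\<^esub>"
      using s' r' assms(2) unfolding left_Ore_set_def by blast
  qed (use assms(2) in \<open>auto simp: left_Ore_set_def\<close>)
qed

context almost_Ore_set
begin

lemma univ_map_left_Ore:
  assumes s: "s \<in> T" and r: "r \<in> carrier A"
  obtains s1 r1 where "s1 \<in> T" "r1 \<in> carrier A" "\<iota> s1 \<otimes>\<^bsub>U\<^esub> \<iota> r = \<iota> r1 \<otimes>\<^bsub>U\<^esub> \<iota> s"
proof -
  interpret U: ring U by (rule ring_univ_loc)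
  interpret hom: ring_hom_ring A U \<iota> using ring_axioms ring_univ_loc univ_map_hom by (rule ring_hom_ringI2)
  obtain s1 s2 r1 where s1: "s1 \<in> T" and s2: "s2 \<in> T" and r1: "r1 \<in> carrier A"
    and eq: "(s1 \<otimes> r \<ominus> r1 \<otimes> s) \<otimes> s2 = \<zero>"
    using almost_Ore[OF s r] by blast
  have diff: "s1 \<otimes> r \<ominus> r1 \<otimes> s \<in> carrier A" using s1 r r1 s by (simp add: T_carrier)
  then have "\<iota> (s1 \<otimes> r \<ominus> r1 \<otimes> s) = \<zero>\<^bsub>U\<^esub>"
    using eq univ_map_mult_right_eq_zero[OF diff s2] by simp
  then have "\<iota> s1 \<otimes>\<^bsub>U\<^esub> \<iota> r \<ominus>\<^bsub>U\<^esub> \<iota> r1 \<otimes>\<^bsub>U\<^esub> \<iota> s = \<zero>\<^bsub>U\<^esub>"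
    using s1 r r1 s by (simp add: T_carrier minus_eq U.minus_eq)
  then have "\<iota> s1 \<otimes>\<^bsub>U\<^esub> \<iota> r = \<iota> r1 \<otimes>\<^bsub>U\<^esub> \<iota> s"
    using s1 r r1 s by (simp add: T_carrier U.r_right_minus_eq)
  with s1 r1 that show ?thesis by blast
qed

lemma univ_x_mult:
  assumes s: "s \<in> T" and t: "t \<in> T"
  shows "\<xi> s \<otimes>\<^bsub>U\<^esub> \<xi> t = \<xi> (t \<otimes> s)"
proof -
  interpret U: ring U by (rule ring_univ_loc)
  note closed = univ_map_closed[OF T_carrier[OF s]] univ_map_closed[OF T_carrier[OF t]]
    univ_x_closed[OF s] univ_x_closed[OF t]
  have \<iota>_ts: "\<iota> (t \<otimes> s) = \<iota> t \<otimes>\<^bsub>U\<^esub> \<iota> s"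
    using s t by (simp add: ring_hom_mult[OF univ_map_hom] T_carrier)
  have "\<iota> (t \<otimes> s) \<otimes>\<^bsub>U\<^esub> (\<xi> s \<otimes>\<^bsub>U\<^esub> \<xi> t) = \<one>\<^bsub>U\<^esub>"
    using closed univ_map_x_inverse[OF s] univ_map_x_inverse[OF t]
    by (simp add: \<iota>_ts U.m_assoc) (simp add: U.m_assoc[symmetric])
  moreover have "(\<xi> s \<otimes>\<^bsub>U\<^esub> \<xi> t) \<otimes>\<^bsub>U\<^esub> \<iota> (t \<otimes> s) = \<one>\<^bsub>U\<^esub>"
    using closed univ_map_x_inverse[OF s] univ_map_x_inverse[OF t]
    by (simp add: \<iota>_ts U.m_assoc) (simp add: U.m_assoc[symmetric])
  ultimately have "\<xi> s \<otimes>\<^bsub>U\<^esub> \<xi> t = inv\<^bsub>U\<^esub> (\<iota> (t \<otimes> s))"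
    using closed s t mult_mem by (intro U.inv_unique') (simp_all add: univ_map_closed T_carrier)
  then show ?thesis using s t mult_mem by (simp add: inv_univ_map)
qed

lemma univ_map_x_swap:
  assumes s: "s \<in> T" and r: "r \<in> carrier A"
  obtains s1 r1 where "s1 \<in> T" "r1 \<in> carrier A" "\<iota> r \<otimes>\<^bsub>U\<^esub> \<xi> s = \<xi> s1 \<otimes>\<^bsub>U\<^esub> \<iota> r1"
proof -
  interpret U: ring U by (rule ring_univ_loc)
  obtain s1 r1 where s1: "s1 \<in> T" and r1: "r1 \<in> carrier A" and eq: "\<iota> s1 \<otimes>\<^bsub>U\<^esub> \<iota> r = \<iota> r1 \<otimes>\<^bsub>U\<^esub> \<iota> s"
    using univ_map_left_Ore[OF s r] .
  note closed = univ_map_closed[OF r] univ_map_closed[OF r1] univ_map_closed[OF T_carrier[OF s]]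
    univ_map_closed[OF T_carrier[OF s1]] univ_x_closed[OF s] univ_x_closed[OF s1]
  have "\<iota> r \<otimes>\<^bsub>U\<^esub> \<xi> s = \<xi> s1 \<otimes>\<^bsub>U\<^esub> (\<iota> s1 \<otimes>\<^bsub>U\<^esub> \<iota> r) \<otimes>\<^bsub>U\<^esub> \<xi> s"
    using closed univ_map_x_inverse(2)[OF s1] by (simp add: U.m_assoc[symmetric])
  also have "\<dots> = \<xi> s1 \<otimes>\<^bsub>U\<^esub> \<iota> r1"
    using closed univ_map_x_inverse(1)[OF s] by (simp add: eq U.m_assoc)
  finally show ?thesis using that s1 r1 by blast
qed

definition left_fractions :: "(('a + 'a) list \<Rightarrow> int) set set" where
  "left_fractions = {\<xi> t \<otimes>\<^bsub>U\<^esub> \<iota> a | t a. t \<in> T \<and> a \<in> carrier A}"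

lemma univ_x_one: "\<xi> \<one> = \<one>\<^bsub>U\<^esub>"
  using inv_univ_map[OF one_mem] ring_hom_one[OF univ_map_hom]
    monoid.inv_one[OF ring.is_monoid[OF ring_univ_loc]] by simp

lemma univ_map_in_left_fractions: "a \<in> carrier A \<Longrightarrow> \<iota> a \<in> left_fractions"
proof -
  assume a: "a \<in> carrier A"
  interpret U: ring U by (rule ring_univ_loc)
  have "\<iota> a = \<xi> \<one> \<otimes>\<^bsub>U\<^esub> \<iota> a" using univ_map_closed[OF a] by (simp add: univ_x_one)
  then show ?thesis unfolding left_fractions_def using a one_mem by blast
qed

lemma univ_x_in_left_fractions: "t \<in> T \<Longrightarrow> \<xi> t \<in> left_fractions"
proof -
  assume t: "t \<in> T"
  interpret U: ring U by (rule ring_univ_loc)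
  have "\<xi> t = \<xi> t \<otimes>\<^bsub>U\<^esub> \<iota> \<one>" using univ_x_closed[OF t] by (simp add: ring_hom_one[OF univ_map_hom])
  then show ?thesis unfolding left_fractions_def using t by blast
qed

lemma left_fractions_subset: "left_fractions \<subseteq> carrier U"
  unfolding left_fractions_def
  using monoid.m_closed[OF ring.is_monoid[OF ring_univ_loc]] univ_x_closed univ_map_closed by blast

lemma left_fractions_mult:
  assumes "u \<in> left_fractions" "v \<in> left_fractions"
  shows "u \<otimes>\<^bsub>U\<^esub> v \<in> left_fractions"
proof -
  interpret U: ring U by (rule ring_univ_loc)
  obtain s a t b where s: "s \<in> T" and a: "a \<in> carrier A" and u: "u = \<xi> s \<otimes>\<^bsub>U\<^esub> \<iota> a"
    and t: "t \<in> T" and b: "b \<in> carrier A" and v: "v = \<xi> t \<otimes>\<^bsub>U\<^esub> \<iota> b"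
    using assms unfolding left_fractions_def by blast
  obtain s1 r1 where s1: "s1 \<in> T" and r1: "r1 \<in> carrier A" and swap: "\<iota> a \<otimes>\<^bsub>U\<^esub> \<xi> t = \<xi> s1 \<otimes>\<^bsub>U\<^esub> \<iota> r1"
    using univ_map_x_swap[OF t a] .
  note closed = univ_map_closed[OF a] univ_map_closed[OF b] univ_map_closed[OF r1]
    univ_x_closed[OF s] univ_x_closed[OF t] univ_x_closed[OF s1]
  have "u \<otimes>\<^bsub>U\<^esub> v = \<xi> s \<otimes>\<^bsub>U\<^esub> (\<iota> a \<otimes>\<^bsub>U\<^esub> \<xi> t) \<otimes>\<^bsub>U\<^esub> \<iota> b"
    using closed by (simp add: u v U.m_assoc)
  also have "\<dots> = (\<xi> s \<otimes>\<^bsub>U\<^esub> \<xi> s1) \<otimes>\<^bsub>U\<^esub> (\<iota> r1 \<otimes>\<^bsub>U\<^esub> \<iota> b)"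
    using closed by (simp add: swap U.m_assoc)
  also have "\<dots> = \<xi> (s1 \<otimes> s) \<otimes>\<^bsub>U\<^esub> \<iota> (r1 \<otimes> b)"
    using s s1 r1 b by (simp add: univ_x_mult ring_hom_mult[OF univ_map_hom])
  finally show ?thesis
    unfolding left_fractions_def using mult_mem[OF s1 s] r1 b by blast
qed

lemma univ_x_common_denom:
  assumes s: "s \<in> T" and t: "t \<in> T"
  obtains d p q where "d \<in> T" "p \<in> carrier A" "q \<in> carrier A"
    "\<xi> s = \<xi> d \<otimes>\<^bsub>U\<^esub> \<iota> p" "\<xi> t = \<xi> d \<otimes>\<^bsub>U\<^esub> \<iota> q"
proof -
  interpret U: ring U by (rule ring_univ_loc)
  obtain p q where p: "p \<in> T" and q: "q \<in> carrier A" and Ore: "\<iota> p \<otimes>\<^bsub>U\<^esub> \<iota> s = \<iota> q \<otimes>\<^bsub>U\<^esub> \<iota> t"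
    using univ_map_left_Ore[OF t T_carrier[OF s]] .
  define d where "d = p \<otimes> s"
  have d: "d \<in> T" using mult_mem[OF p s] by (simp add: d_def)
  note closed = univ_map_closed[OF q] univ_map_closed[OF T_carrier[OF t]]
    univ_map_closed[OF T_carrier[OF p]] univ_x_closed[OF s] univ_x_closed[OF t] univ_x_closed[OF p]
    univ_x_closed[OF d]
  have \<iota>_d: "\<iota> d = \<iota> p \<otimes>\<^bsub>U\<^esub> \<iota> s"
    using s p by (simp add: d_def ring_hom_mult[OF univ_map_hom] T_carrier)
  have "\<xi> d \<otimes>\<^bsub>U\<^esub> \<iota> p = \<xi> s \<otimes>\<^bsub>U\<^esub> (\<xi> p \<otimes>\<^bsub>U\<^esub> \<iota> p)"
    using closed s p by (simp add: d_def univ_x_mult[symmetric] U.m_assoc)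
  then have "\<xi> s = \<xi> d \<otimes>\<^bsub>U\<^esub> \<iota> p" using closed univ_map_x_inverse(2)[OF p] by simp
  moreover have "\<xi> d \<otimes>\<^bsub>U\<^esub> \<iota> q = \<xi> d \<otimes>\<^bsub>U\<^esub> (\<iota> q \<otimes>\<^bsub>U\<^esub> \<iota> t) \<otimes>\<^bsub>U\<^esub> \<xi> t"
    using closed univ_map_x_inverse(1)[OF t] by (simp add: U.m_assoc)
  then have "\<xi> t = \<xi> d \<otimes>\<^bsub>U\<^esub> \<iota> q"
    using closed univ_map_x_inverse(2)[OF d] by (simp add: Ore[symmetric] \<iota>_d[symmetric])
  ultimately show ?thesis using that d T_carrier[OF p] q by blast
qed

lemma left_fractions_add:
  assumes "u \<in> left_fractions" "v \<in> left_fractions"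
  shows "u \<oplus>\<^bsub>U\<^esub> v \<in> left_fractions"
proof -
  interpret U: ring U by (rule ring_univ_loc)
  obtain s a t b where s: "s \<in> T" and a: "a \<in> carrier A" and u: "u = \<xi> s \<otimes>\<^bsub>U\<^esub> \<iota> a"
    and t: "t \<in> T" and b: "b \<in> carrier A" and v: "v = \<xi> t \<otimes>\<^bsub>U\<^esub> \<iota> b"
    using assms unfolding left_fractions_def by blast
  obtain d p q where d: "d \<in> T" and p: "p \<in> carrier A" and q: "q \<in> carrier A"
    and xs: "\<xi> s = \<xi> d \<otimes>\<^bsub>U\<^esub> \<iota> p" and xt: "\<xi> t = \<xi> d \<otimes>\<^bsub>U\<^esub> \<iota> q"
    using univ_x_common_denom[OF s t] .
  note closed = univ_map_closed[OF a] univ_map_closed[OF b] univ_map_closed[OF p] univ_map_closed[OF q]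
    univ_x_closed[OF d]
  have "u \<oplus>\<^bsub>U\<^esub> v = \<xi> d \<otimes>\<^bsub>U\<^esub> (\<iota> p \<otimes>\<^bsub>U\<^esub> \<iota> a \<oplus>\<^bsub>U\<^esub> \<iota> q \<otimes>\<^bsub>U\<^esub> \<iota> b)"
    using closed by (simp add: u v xs xt U.m_assoc U.r_distr)
  also have "\<dots> = \<xi> d \<otimes>\<^bsub>U\<^esub> \<iota> (p \<otimes> a \<oplus> q \<otimes> b)"
    using a b p q by (simp add: ring_hom_mult[OF univ_map_hom] ring_hom_add[OF univ_map_hom])
  finally show ?thesis
    unfolding left_fractions_def using d a b p q by blast
qed

lemma left_fractions_uminus:
  assumes "u \<in> left_fractions"
  shows "\<ominus>\<^bsub>U\<^esub> u \<in> left_fractions"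
proof -
  interpret U: ring U by (rule ring_univ_loc)
  interpret hom: ring_hom_ring A U \<iota> using ring_axioms ring_univ_loc univ_map_hom by (rule ring_hom_ringI2)
  obtain s a where s: "s \<in> T" and a: "a \<in> carrier A" and u: "u = \<xi> s \<otimes>\<^bsub>U\<^esub> \<iota> a"
    using assms unfolding left_fractions_def by blast
  have "\<ominus>\<^bsub>U\<^esub> u = \<xi> s \<otimes>\<^bsub>U\<^esub> \<iota> (\<ominus> a)"
    using s a univ_x_closed univ_map_closed by (simp add: u U.r_minus)
  then show ?thesis unfolding left_fractions_def using s a by blast
qed

lemma carrier_univ_loc_eq_left_fractions: "carrier U = left_fractions"
proof
  interpret F: ring FL by (rule ring_free_ring)
  interpret proj: ring_hom_ring FL U "(+>\<^bsub>FL\<^esub>) IL"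
    using F.ring_axioms ring_univ_loc loc_proj_hom by (rule ring_hom_ringI2)
  show "carrier U \<subseteq> left_fractions"
  proof
    fix u assume "u \<in> carrier U"
    then obtain f where f: "f \<in> carrier FL" and u: "u = IL +>\<^bsub>FL\<^esub> f"
      unfolding univ_loc_def by (elim ideal.FactRing_elemE[OF ideal_loc_ideal])
    from f have "IL +>\<^bsub>FL\<^esub> f \<in> left_fractions"
    proof (induction rule: free_ring_induct)
      case (letter y)
      then consider a where "a \<in> carrier A" "y = Inl a" | t where "t \<in> T" "y = Inr t"
        by (auto simp: loc_alphabet_def)
      then show ?case
        by cases (auto simp: univ_map_def[symmetric] univ_x_def[symmetric]
            univ_map_in_left_fractions univ_x_in_left_fractions)
    next
      case one
      show ?case using univ_map_in_left_fractions[of \<one>]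
        by (simp add: ring_hom_one[OF univ_map_hom])
    qed (simp_all add: left_fractions_add left_fractions_mult left_fractions_uminus)
    then show "u \<in> left_fractions" by (simp add: u)
  qed
qed (rule left_fractions_subset)

lemma left_localizable_iff_nontrivial: "left_localizable A T \<longleftrightarrow> \<one>\<^bsub>U\<^esub> \<noteq> \<zero>\<^bsub>U\<^esub>"
  using carrier_univ_loc_eq_left_fractions
  unfolding left_localizable_def left_fractions_def by blast

lemma inj_on_univ_loc_hom:
  assumes B: "ring B" and \<psi>: "\<psi> \<in> ring_hom U B"
    and kernel: "\<And>a. a \<in> carrier A \<Longrightarrow> \<psi> (\<iota> a) = \<zero>\<^bsub>B\<^esub> \<Longrightarrow> \<iota> a = \<zero>\<^bsub>U\<^esub>"
  shows "inj_on \<psi> (carrier U)"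
proof -
  interpret U: ring U by (rule ring_univ_loc)
  interpret \<psi>: ring_hom_ring U B \<psi> using U.ring_axioms B \<psi> by (rule ring_hom_ringI2)
  have "u = \<zero>\<^bsub>U\<^esub>" if u: "u \<in> carrier U" "\<psi> u = \<zero>\<^bsub>B\<^esub>" for u
  proof -
    obtain t a where t: "t \<in> T" and a: "a \<in> carrier A" and u_eq: "u = \<xi> t \<otimes>\<^bsub>U\<^esub> \<iota> a"
      using u(1) unfolding carrier_univ_loc_eq_left_fractions left_fractions_def by blast
    note closed = univ_map_closed[OF a] univ_map_closed[OF T_carrier[OF t]] univ_x_closed[OF t]
    have "\<iota> a = \<iota> t \<otimes>\<^bsub>U\<^esub> u"
      using univ_map_x_inverse(1)[OF t] closed by (simp add: u_eq U.m_assoc[symmetric])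
    then have "\<psi> (\<iota> a) = \<zero>\<^bsub>B\<^esub>" using u closed by simp
    then show ?thesis using kernel[OF a] closed by (simp add: u_eq)
  qed
  then have "a_kernel U B \<psi> \<subseteq> {\<zero>\<^bsub>U\<^esub>}" unfolding a_kernel_def' by blast
  moreover have "\<zero>\<^bsub>U\<^esub> \<in> a_kernel U B \<psi>" unfolding a_kernel_def' by simp
  ultimately have "a_kernel U B \<psi> = {\<zero>\<^bsub>U\<^esub>}" by blast
  then show ?thesis by (rule \<psi>.trivial_ker_imp_inj)
qed

lemma univ_loc_iso:
  assumes B: "ring B" and f: "f \<in> ring_hom A B" and units: "\<And>t. t \<in> T \<Longrightarrow> f t \<in> Units B"
    and kernel: "\<And>a. a \<in> carrier A \<Longrightarrow> f a = \<zero>\<^bsub>B\<^esub> \<Longrightarrow> a \<in> ass A T"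
    and fractions: "\<And>b. b \<in> carrier B \<Longrightarrow> \<exists>t\<in>T. \<exists>a\<in>carrier A. b = inv\<^bsub>B\<^esub> (f t) \<otimes>\<^bsub>B\<^esub> f a"
  shows "\<exists>\<psi>. \<psi> \<in> ring_iso U B \<and> (\<forall>a\<in>carrier A. \<psi> (\<iota> a) = f a)"
proof -
  obtain \<psi> where \<psi>: "\<psi> \<in> ring_hom U B" and \<psi>_\<iota>: "\<And>a. a \<in> carrier A \<Longrightarrow> \<psi> (\<iota> a) = f a"
    and \<psi>_\<xi>: "\<And>t. t \<in> T \<Longrightarrow> \<psi> (\<xi> t) = inv\<^bsub>B\<^esub> (f t)"
    using univ_map_lift[OF B f units] by metis
  have inj: "inj_on \<psi> (carrier U)"
    using inj_on_univ_loc_hom[OF B \<psi>] kernel \<psi>_\<iota> by (simp add: ass_def)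
  have "carrier B \<subseteq> \<psi> ` carrier U"
  proof
    fix b assume "b \<in> carrier B"
    then obtain t a where t: "t \<in> T" and a: "a \<in> carrier A" and b: "b = inv\<^bsub>B\<^esub> (f t) \<otimes>\<^bsub>B\<^esub> f a"
      using fractions by blast
    have "\<psi> (\<xi> t \<otimes>\<^bsub>U\<^esub> \<iota> a) = b"
      using t a univ_x_closed univ_map_closed by (simp add: ring_hom_mult[OF \<psi>] \<psi>_\<iota> \<psi>_\<xi> b)
    then show "b \<in> \<psi> ` carrier U"
      using ring.ring_simprules(5)[OF ring_univ_loc univ_x_closed[OF t] univ_map_closed[OF a]] by blast
  qed
  moreover have "\<psi> ` carrier U \<subseteq> carrier B" using ring_hom_closed[OF \<psi>] by blast
  ultimately have "bij_betw \<psi> (carrier U) (carrier B)"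
    using inj unfolding bij_betw_def by blast
  then have "\<psi> \<in> ring_iso U B" using \<psi> by (simp add: ring_iso_def)
  then show ?thesis using \<psi>_\<iota> by blast
qed

end

section \<open>Rings of left fractions\<close>

locale left_Ore_regular = ring A for A :: "('a, 'm) ring_scheme" (structure) +
  fixes T :: "'a set"
  assumes T_subset: "T \<subseteq> carrier A"
    and one_mem: "\<one> \<in> T"
    and mult_mem: "s \<in> T \<Longrightarrow> t \<in> T \<Longrightarrow> s \<otimes> t \<in> T"
    and left_Ore: "r \<in> carrier A \<Longrightarrow> s \<in> T \<Longrightarrow> \<exists>s'\<in>T. \<exists>r'\<in>carrier A. s' \<otimes> r = r' \<otimes> s"
    and regular_right: "x \<in> carrier A \<Longrightarrow> t \<in> T \<Longrightarrow> x \<otimes> t = \<zero> \<Longrightarrow> x = \<zero>"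
    and regular_left: "x \<in> carrier A \<Longrightarrow> t \<in> T \<Longrightarrow> t \<otimes> x = \<zero> \<Longrightarrow> x = \<zero>"

lemma left_Ore_regularI:
  assumes "ring A" "left_Ore_set A T"
    and "\<And>x t. x \<in> carrier A \<Longrightarrow> t \<in> T \<Longrightarrow> x \<otimes>\<^bsub>A\<^esub> t = \<zero>\<^bsub>A\<^esub> \<Longrightarrow> x = \<zero>\<^bsub>A\<^esub>"
    and "\<And>x t. x \<in> carrier A \<Longrightarrow> t \<in> T \<Longrightarrow> t \<otimes>\<^bsub>A\<^esub> x = \<zero>\<^bsub>A\<^esub> \<Longrightarrow> x = \<zero>\<^bsub>A\<^esub>"
  shows "left_Ore_regular A T"
proof (intro left_Ore_regular.intro left_Ore_regular_axioms.intro assms(1))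
  fix r s assume "r \<in> carrier A" "s \<in> T"
  then show "\<exists>s'\<in>T. \<exists>r'\<in>carrier A. s' \<otimes>\<^bsub>A\<^esub> r = r' \<otimes>\<^bsub>A\<^esub> s"
    using assms(2) unfolding left_Ore_set_def by blast
qed (use assms(2-4) in \<open>simp_all add: left_Ore_set_def\<close>)

context left_Ore_regular
begin

lemma T_carrier [simp]: "t \<in> T \<Longrightarrow> t \<in> carrier A"
  using T_subset by auto

lemma cancel_right:
  assumes "x \<in> carrier A" "y \<in> carrier A" "t \<in> T" "x \<otimes> t = y \<otimes> t"
  shows "x = y"
proof -
  have "(x \<ominus> y) \<otimes> t = \<zero>" using assms by (simp add: l_minus minus_eq l_distr r_neg)
  then show ?thesis using regular_right[of "x \<ominus> y" t] assms by (simp add: r_right_minus_eq)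
qed

lemma cancel_left:
  assumes "x \<in> carrier A" "y \<in> carrier A" "t \<in> T" "t \<otimes> x = t \<otimes> y"
  shows "x = y"
proof -
  have "t \<otimes> (x \<ominus> y) = \<zero>" using assms by (simp add: r_minus minus_eq r_distr r_neg)
  then show ?thesis using regular_left[of "x \<ominus> y" t] assms by (simp add: r_right_minus_eq)
qed

lemma common_multiple:
  assumes "t1 \<in> T" "t2 \<in> T"
  obtains d c1 c2 where "d \<in> T" "c1 \<in> carrier A" "c2 \<in> carrier A" "c1 \<otimes> t1 = d" "c2 \<otimes> t2 = d"
proof -
  obtain s r where s: "s \<in> T" and r: "r \<in> carrier A" and eq: "s \<otimes> t1 = r \<otimes> t2"
    using left_Ore[of t1 t2] assms by auto
  show ?thesis
    by (rule that[of "s \<otimes> t1" s r]) (use s r eq assms mult_mem[OF s assms(1)] in simp_all)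
qed

text \<open>A pair \<open>(t, a)\<close> stands for the fraction \<open>t\<inverse> a\<close>. Since the denominators are right
  regular, two pairs represent the same fraction iff every common left multiple \<open>c t = c' t'\<close>
  of the denominators yields equal numerators \<open>c a = c' a'\<close>.\<close>

definition frac_rel :: "'a \<times> 'a \<Rightarrow> 'a \<times> 'a \<Rightarrow> bool" where
  "frac_rel p q \<longleftrightarrow>
     (\<forall>c\<in>carrier A. \<forall>c'\<in>carrier A. c \<otimes> fst p = c' \<otimes> fst q \<longrightarrow> c \<otimes> snd p = c' \<otimes> snd q)"

lemma frac_relI:
  assumes "\<And>c c'. c \<in> carrier A \<Longrightarrow> c' \<in> carrier A \<Longrightarrow> c \<otimes> t = c' \<otimes> t' \<Longrightarrow> c \<otimes> a = c' \<otimes> a'"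
  shows "frac_rel (t, a) (t', a')"
  using assms unfolding frac_rel_def by auto

lemma frac_relD:
  assumes "frac_rel (t, a) (t', a')" "c \<in> carrier A" "c' \<in> carrier A" "c \<otimes> t = c' \<otimes> t'"
  shows "c \<otimes> a = c' \<otimes> a'"
  using assms unfolding frac_rel_def by auto

lemma frac_rel_refl:
  assumes "t \<in> T"
  shows "frac_rel (t, a) (t, a)"
proof (rule frac_relI)
  fix c c' assume "c \<in> carrier A" "c' \<in> carrier A" "c \<otimes> t = c' \<otimes> t"
  then have "c = c'" using cancel_right assms by blast
  then show "c \<otimes> a = c' \<otimes> a" by simp
qed

lemma frac_rel_sym:
  assumes "frac_rel p q"
  shows "frac_rel q p"
  unfolding frac_rel_def
proof (intro ballI impI)
  fix c c' assume c: "c \<in> carrier A" "c' \<in> carrier A" and eq: "c \<otimes> fst q = c' \<otimes> fst p"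
  then have "c' \<otimes> snd p = c \<otimes> snd q"
    using assms unfolding frac_rel_def by simp
  then show "c \<otimes> snd q = c' \<otimes> snd p" by simp
qed

lemma frac_rel_trans:
  assumes t: "t \<in> T" "t' \<in> T" "t'' \<in> T" and a: "a \<in> carrier A" "a' \<in> carrier A" "a'' \<in> carrier A"
    and rel: "frac_rel (t, a) (t', a')" "frac_rel (t', a') (t'', a'')"
  shows "frac_rel (t, a) (t'', a'')"
proof (rule frac_relI)
  fix c c'' assume c: "c \<in> carrier A" "c'' \<in> carrier A" and eq: "c \<otimes> t = c'' \<otimes> t''"
  obtain v d where v: "v \<in> T" and d: "d \<in> carrier A" and vd: "v \<otimes> (c \<otimes> t) = d \<otimes> t'"
    using left_Ore[of "c \<otimes> t" t'] t c by auto
  have "(v \<otimes> c) \<otimes> a = d \<otimes> a'"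
    by (rule frac_relD[OF rel(1)]) (use v d c t vd in \<open>simp_all add: m_assoc\<close>)
  also have "\<dots> = (v \<otimes> c'') \<otimes> a''"
    by (rule frac_relD[OF rel(2)]) (use v d c t vd eq in \<open>simp_all add: m_assoc\<close>)
  finally have "v \<otimes> (c \<otimes> a) = v \<otimes> (c'' \<otimes> a'')"
    using v c a by (simp add: m_assoc)
  then show "c \<otimes> a = c'' \<otimes> a''"
    using cancel_left v c a by simp
qed

definition frac :: "'a \<Rightarrow> 'a \<Rightarrow> ('a \<times> 'a) set" where
  "frac t a = {q \<in> T \<times> carrier A. frac_rel (t, a) q}"

lemma frac_eq_iff:
  assumes "t \<in> T" "a \<in> carrier A" "t' \<in> T" "a' \<in> carrier A"
  shows "frac t a = frac t' a' \<longleftrightarrow> frac_rel (t, a) (t', a')"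
proof
  assume "frac t a = frac t' a'"
  then have "(t', a') \<in> frac t a" using assms frac_rel_refl by (auto simp: frac_def)
  then show "frac_rel (t, a) (t', a')" by (simp add: frac_def)
next
  assume rel: "frac_rel (t, a) (t', a')"
  have "frac_rel (t, a) (s, b) \<longleftrightarrow> frac_rel (t', a') (s, b)" if "s \<in> T" "b \<in> carrier A" for s b
    using that assms frac_rel_trans[OF _ _ _ _ _ _ rel] frac_rel_trans[OF _ _ _ _ _ _ frac_rel_sym[OF rel]]
    by blast
  then show "frac t a = frac t' a'" unfolding frac_def by blast
qed

lemma frac_expand:
  assumes "c \<in> carrier A" "t \<in> T" "c \<otimes> t \<in> T" "a \<in> carrier A"
  shows "frac (c \<otimes> t) (c \<otimes> a) = frac t a"
proof -
  have "frac_rel (c \<otimes> t, c \<otimes> a) (t, a)"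
  proof (rule frac_relI)
    fix e e' assume e: "e \<in> carrier A" "e' \<in> carrier A" and eq: "e \<otimes> (c \<otimes> t) = e' \<otimes> t"
    have "e \<otimes> c = e'"
      by (rule cancel_right[where t = t]) (use assms e eq in \<open>simp_all add: m_assoc\<close>)
    then show "e \<otimes> (c \<otimes> a) = e' \<otimes> a" using assms e by (simp add: m_assoc[symmetric])
  qed
  then show ?thesis using assms by (simp add: frac_eq_iff)
qed

lemma frac_common_denom:
  assumes "t1 \<in> T" "t2 \<in> T" "t3 \<in> T" "a1 \<in> carrier A" "a2 \<in> carrier A" "a3 \<in> carrier A"
  obtains d b1 b2 b3 where "d \<in> T" "b1 \<in> carrier A" "b2 \<in> carrier A" "b3 \<in> carrier A"
    "frac t1 a1 = frac d b1" "frac t2 a2 = frac d b2" "frac t3 a3 = frac d b3"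
proof -
  obtain d12 c1 c2 where d12: "d12 \<in> T" "c1 \<in> carrier A" "c2 \<in> carrier A" "c1 \<otimes> t1 = d12" "c2 \<otimes> t2 = d12"
    using common_multiple assms(1,2) by blast
  obtain d e c3 where d: "d \<in> T" "e \<in> carrier A" "c3 \<in> carrier A" "e \<otimes> d12 = d" "c3 \<otimes> t3 = d"
    using common_multiple d12(1) assms(3) by blast
  have "frac t1 a1 = frac d ((e \<otimes> c1) \<otimes> a1)"
    using frac_expand[of "e \<otimes> c1" t1 a1] assms d12 d by (simp add: m_assoc)
  moreover have "frac t2 a2 = frac d ((e \<otimes> c2) \<otimes> a2)"
    using frac_expand[of "e \<otimes> c2" t2 a2] assms d12 d by (simp add: m_assoc)
  moreover have "frac t3 a3 = frac d (c3 \<otimes> a3)"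
    using frac_expand[of c3 t3 a3] assms d by simp
  ultimately show ?thesis
    using assms d12 d by (intro that[of d "(e \<otimes> c1) \<otimes> a1" "(e \<otimes> c2) \<otimes> a2" "c3 \<otimes> a3"]) simp_all
qed

lemma frac_rel_add_cong:
  assumes T: "t \<in> T" "t' \<in> T" "t1 \<in> T" "t1' \<in> T" "u \<in> T" "u1 \<in> T"
    and C: "a \<in> carrier A" "b \<in> carrier A" "a1 \<in> carrier A" "b1 \<in> carrier A"
      "v \<in> carrier A" "v1 \<in> carrier A"
    and eq: "u \<otimes> t = v \<otimes> t'" and eq1: "u1 \<otimes> t1 = v1 \<otimes> t1'"
    and rel: "frac_rel (t, a) (t1, a1)" and rel': "frac_rel (t', b) (t1', b1)"
  shows "frac_rel (u \<otimes> t, u \<otimes> a \<oplus> v \<otimes> b) (u1 \<otimes> t1, u1 \<otimes> a1 \<oplus> v1 \<otimes> b1)"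
proof (rule frac_relI)
  fix c c' assume c: "c \<in> carrier A" "c' \<in> carrier A" and h: "c \<otimes> (u \<otimes> t) = c' \<otimes> (u1 \<otimes> t1)"
  have "(c \<otimes> u) \<otimes> a = (c' \<otimes> u1) \<otimes> a1"
    by (rule frac_relD[OF rel]) (use T C c h in \<open>simp_all add: m_assoc\<close>)
  moreover have "(c \<otimes> v) \<otimes> b = (c' \<otimes> v1) \<otimes> b1"
    by (rule frac_relD[OF rel']) (use T C c h in \<open>simp_all add: m_assoc eq[symmetric] eq1[symmetric]\<close>)
  ultimately show "c \<otimes> (u \<otimes> a \<oplus> v \<otimes> b) = c' \<otimes> (u1 \<otimes> a1 \<oplus> v1 \<otimes> b1)"
    using T C c by (simp add: r_distr m_assoc)
qed

lemma frac_rel_mult_cong: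
  assumes T: "t \<in> T" "t' \<in> T" "t1 \<in> T" "t1' \<in> T" "u \<in> T" "u1 \<in> T"
    and C: "a \<in> carrier A" "b \<in> carrier A" "a1 \<in> carrier A" "b1 \<in> carrier A"
      "v \<in> carrier A" "v1 \<in> carrier A"
    and eq: "u \<otimes> a = v \<otimes> t'" and eq1: "u1 \<otimes> a1 = v1 \<otimes> t1'"
    and rel: "frac_rel (t, a) (t1, a1)" and rel': "frac_rel (t', b) (t1', b1)"
  shows "frac_rel (u \<otimes> t, v \<otimes> b) (u1 \<otimes> t1, v1 \<otimes> b1)"
proof (rule frac_relI)
  fix c c' assume c: "c \<in> carrier A" "c' \<in> carrier A" and h: "c \<otimes> (u \<otimes> t) = c' \<otimes> (u1 \<otimes> t1)"
  have "(c \<otimes> u) \<otimes> a = (c' \<otimes> u1) \<otimes> a1"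
    by (rule frac_relD[OF rel]) (use T C c h in \<open>simp_all add: m_assoc\<close>)
  then have "(c \<otimes> v) \<otimes> t' = (c' \<otimes> v1) \<otimes> t1'"
    using T C c by (simp add: m_assoc eq eq1)
  then have "(c \<otimes> v) \<otimes> b = (c' \<otimes> v1) \<otimes> b1"
    by (rule frac_relD[OF rel', rotated 2]) (use C c in simp_all)
  then show "c \<otimes> (v \<otimes> b) = c' \<otimes> (v1 \<otimes> b1)"
    using T C c by (simp add: m_assoc)
qed

definition frac_rep :: "('a \<times> 'a) set \<Rightarrow> 'a \<times> 'a" where
  "frac_rep P = (SOME p. p \<in> P)"

definition Ore_witness :: "'a \<Rightarrow> 'a \<Rightarrow> 'a \<times> 'a" where
  "Ore_witness r s = (SOME (u, v). u \<in> T \<and> v \<in> carrier A \<and> u \<otimes> r = v \<otimes> s)"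

text \<open>If \<open>u t = v t'\<close>, then \<open>u t\<close> is a common denominator of \<open>t\<inverse> a\<close> and \<open>t'\<inverse> b\<close>;
  if \<open>u a = v t'\<close>, then \<open>a t'\<inverse> = u\<inverse> v\<close>.\<close>

definition frac_ring :: "('a \<times> 'a) set ring" where
  "frac_ring =
     \<lparr>carrier = {frac t a | t a. t \<in> T \<and> a \<in> carrier A},
      monoid.mult = (\<lambda>P Q. case (frac_rep P, frac_rep Q) of ((t, a), (t', b)) \<Rightarrow>
        (case Ore_witness a t' of (u, v) \<Rightarrow> frac (u \<otimes> t) (v \<otimes> b))),
      one = frac \<one> \<one>,
      ring.zero = frac \<one> \<zero>,
      ring.add = (\<lambda>P Q. case (frac_rep P, frac_rep Q) of ((t, a), (t', b)) \<Rightarrow>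
        (case Ore_witness t t' of (u, v) \<Rightarrow> frac (u \<otimes> t) (u \<otimes> a \<oplus> v \<otimes> b)))\<rparr>"

lemma frac_repE:
  assumes "t \<in> T" "a \<in> carrier A"
  obtains t0 a0 where "frac_rep (frac t a) = (t0, a0)" "t0 \<in> T" "a0 \<in> carrier A" "frac_rel (t0, a0) (t, a)"
proof -
  have "(t, a) \<in> frac t a" using assms frac_rel_refl by (simp add: frac_def)
  then have "frac_rep (frac t a) \<in> frac t a" unfolding frac_rep_def by (rule someI)
  then show ?thesis using that frac_rel_sym by (auto simp: frac_def)
qed

lemma Ore_witnessE:
  assumes "r \<in> carrier A" "s \<in> T"
  obtains u v where "Ore_witness r s = (u, v)" "u \<in> T" "v \<in> carrier A" "u \<otimes> r = v \<otimes> s"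
proof -
  have "\<exists>p. fst p \<in> T \<and> snd p \<in> carrier A \<and> fst p \<otimes> r = snd p \<otimes> s"
    using left_Ore[OF assms] by auto
  then have "fst (Ore_witness r s) \<in> T \<and> snd (Ore_witness r s) \<in> carrier A
      \<and> fst (Ore_witness r s) \<otimes> r = snd (Ore_witness r s) \<otimes> s"
    unfolding Ore_witness_def case_prod_beta by (rule someI_ex)
  then show ?thesis using that by (cases "Ore_witness r s") auto
qed

lemma frac_add:
  assumes "t \<in> T" "t' \<in> T" "a \<in> carrier A" "b \<in> carrier A" "u \<in> T" "v \<in> carrier A"
    and "u \<otimes> t = v \<otimes> t'"
  shows "frac t a \<oplus>\<^bsub>frac_ring\<^esub> frac t' b = frac (u \<otimes> t) (u \<otimes> a \<oplus> v \<otimes> b)"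
proof -
  obtain t0 a0 where r: "frac_rep (frac t a) = (t0, a0)" "t0 \<in> T" "a0 \<in> carrier A" "frac_rel (t0, a0) (t, a)"
    using frac_repE assms by metis
  obtain t1 b1 where r': "frac_rep (frac t' b) = (t1, b1)" "t1 \<in> T" "b1 \<in> carrier A" "frac_rel (t1, b1) (t', b)"
    using frac_repE assms by metis
  obtain u0 v0 where w: "Ore_witness t0 t1 = (u0, v0)" "u0 \<in> T" "v0 \<in> carrier A" "u0 \<otimes> t0 = v0 \<otimes> t1"
    using Ore_witnessE r(2) r'(2) by (metis T_carrier)
  have "frac t a \<oplus>\<^bsub>frac_ring\<^esub> frac t' b = frac (u0 \<otimes> t0) (u0 \<otimes> a0 \<oplus> v0 \<otimes> b1)"
    by (simp add: frac_ring_def r r' w)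
  also have "\<dots> = frac (u \<otimes> t) (u \<otimes> a \<oplus> v \<otimes> b)"
    using frac_rel_add_cong[OF r(2) r'(2) assms(1,2) w(2) assms(5) r(3) r'(3) assms(3,4) w(3) assms(6)
        w(4) assms(7) r(4) r'(4)] assms(1-6) r(2,3) r'(2,3) w(2,3) mult_mem
    by (subst frac_eq_iff) simp_all
  finally show ?thesis .
qed

lemma frac_mult:
  assumes "t \<in> T" "t' \<in> T" "a \<in> carrier A" "b \<in> carrier A" "u \<in> T" "v \<in> carrier A"
    and "u \<otimes> a = v \<otimes> t'"
  shows "frac t a \<otimes>\<^bsub>frac_ring\<^esub> frac t' b = frac (u \<otimes> t) (v \<otimes> b)"
proof -
  obtain t0 a0 where r: "frac_rep (frac t a) = (t0, a0)" "t0 \<in> T" "a0 \<in> carrier A" "frac_rel (t0, a0) (t, a)"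
    using frac_repE assms by metis
  obtain t1 b1 where r': "frac_rep (frac t' b) = (t1, b1)" "t1 \<in> T" "b1 \<in> carrier A" "frac_rel (t1, b1) (t', b)"
    using frac_repE assms by metis
  obtain u0 v0 where w: "Ore_witness a0 t1 = (u0, v0)" "u0 \<in> T" "v0 \<in> carrier A" "u0 \<otimes> a0 = v0 \<otimes> t1"
    using Ore_witnessE r(3) r'(2) by metis
  have "frac t a \<otimes>\<^bsub>frac_ring\<^esub> frac t' b = frac (u0 \<otimes> t0) (v0 \<otimes> b1)"
    by (simp add: frac_ring_def r r' w)
  also have "\<dots> = frac (u \<otimes> t) (v \<otimes> b)"
    using frac_rel_mult_cong[OF r(2) r'(2) assms(1,2) w(2) assms(5) r(3) r'(3) assms(3,4) w(3) assms(6)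
        w(4) assms(7) r(4) r'(4)] assms(1-6) r(2,3) r'(2,3) w(2,3) mult_mem
    by (subst frac_eq_iff) simp_all
  finally show ?thesis .
qed

lemma frac_closed: "t \<in> T \<Longrightarrow> a \<in> carrier A \<Longrightarrow> frac t a \<in> carrier frac_ring"
  by (auto simp: frac_ring_def)

lemma frac_ring_elemE:
  assumes "P \<in> carrier frac_ring"
  obtains t a where "t \<in> T" "a \<in> carrier A" "P = frac t a"
  using assms by (auto simp: frac_ring_def)

lemma frac_ring_zero: "\<zero>\<^bsub>frac_ring\<^esub> = frac \<one> \<zero>"
  by (simp add: frac_ring_def)

lemma frac_ring_one: "\<one>\<^bsub>frac_ring\<^esub> = frac \<one> \<one>"
  by (simp add: frac_ring_def)

lemma frac_add_same_denom:
  "d \<in> T \<Longrightarrow> a \<in> carrier A \<Longrightarrow> b \<in> carrier A \<Longrightarrow> frac d a \<oplus>\<^bsub>frac_ring\<^esub> frac d b = frac d (a \<oplus> b)"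
  using frac_add[of d d a b \<one> \<one>] one_mem by simp

lemma frac_zero_eq: "d \<in> T \<Longrightarrow> frac d \<zero> = frac \<one> \<zero>"
  using frac_expand[of d \<one> \<zero>] one_mem by simp

lemma frac_add_closed:
  assumes "P \<in> carrier frac_ring" "Q \<in> carrier frac_ring"
  shows "P \<oplus>\<^bsub>frac_ring\<^esub> Q \<in> carrier frac_ring"
proof -
  obtain t a t' b where "t \<in> T" "a \<in> carrier A" "P = frac t a" "t' \<in> T" "b \<in> carrier A" "Q = frac t' b"
    using assms by (metis frac_ring_elemE)
  moreover obtain u v where "u \<in> T" "v \<in> carrier A" and eq: "u \<otimes> t = v \<otimes> t'"
    using Ore_witnessE \<open>t \<in> T\<close> \<open>t' \<in> T\<close> by (metis T_carrier)
  ultimately show ?thesis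
    using frac_add[OF _ _ _ _ _ _ eq] frac_closed[OF mult_mem[of u t]] by simp
qed

lemma frac_mult_closed:
  assumes "P \<in> carrier frac_ring" "Q \<in> carrier frac_ring"
  shows "P \<otimes>\<^bsub>frac_ring\<^esub> Q \<in> carrier frac_ring"
proof -
  obtain t a t' b where "t \<in> T" "a \<in> carrier A" "P = frac t a" "t' \<in> T" "b \<in> carrier A" "Q = frac t' b"
    using assms by (metis frac_ring_elemE)
  moreover obtain u v where "u \<in> T" "v \<in> carrier A" and eq: "u \<otimes> a = v \<otimes> t'"
    using Ore_witnessE \<open>a \<in> carrier A\<close> \<open>t' \<in> T\<close> by metis
  ultimately show ?thesis
    using frac_mult[OF _ _ _ _ _ _ eq] frac_closed[OF mult_mem[of u t]] by simp
qed

lemma frac_add_assoc: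
  assumes "P \<in> carrier frac_ring" "Q \<in> carrier frac_ring" "R \<in> carrier frac_ring"
  shows "P \<oplus>\<^bsub>frac_ring\<^esub> Q \<oplus>\<^bsub>frac_ring\<^esub> R = P \<oplus>\<^bsub>frac_ring\<^esub> (Q \<oplus>\<^bsub>frac_ring\<^esub> R)"
proof -
  obtain t1 a1 t2 a2 t3 a3 where "t1 \<in> T" "a1 \<in> carrier A" "P = frac t1 a1" "t2 \<in> T" "a2 \<in> carrier A"
      "Q = frac t2 a2" "t3 \<in> T" "a3 \<in> carrier A" "R = frac t3 a3"
    using assms by (metis frac_ring_elemE)
  then obtain d b1 b2 b3 where "d \<in> T" "b1 \<in> carrier A" "b2 \<in> carrier A" "b3 \<in> carrier A"
      "P = frac d b1" "Q = frac d b2" "R = frac d b3"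
    by (metis frac_common_denom)
  then show ?thesis by (simp add: frac_add_same_denom a_assoc)
qed

lemma frac_add_comm:
  assumes "P \<in> carrier frac_ring" "Q \<in> carrier frac_ring"
  shows "P \<oplus>\<^bsub>frac_ring\<^esub> Q = Q \<oplus>\<^bsub>frac_ring\<^esub> P"
proof -
  obtain t1 a1 t2 a2 where "t1 \<in> T" "a1 \<in> carrier A" "P = frac t1 a1" "t2 \<in> T" "a2 \<in> carrier A"
      "Q = frac t2 a2"
    using assms by (metis frac_ring_elemE)
  then obtain d b1 b2 where "d \<in> T" "b1 \<in> carrier A" "b2 \<in> carrier A" "P = frac d b1" "Q = frac d b2"
    by (metis frac_common_denom)
  then show ?thesis by (simp add: frac_add_same_denom a_comm)
qed

lemma frac_zero_add: "P \<in> carrier frac_ring \<Longrightarrow> \<zero>\<^bsub>frac_ring\<^esub> \<oplus>\<^bsub>frac_ring\<^esub> P = P"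
  by (elim frac_ring_elemE) (simp add: frac_ring_zero frac_add[where u = _ and v = \<one>] one_mem)

lemma frac_add_inverse:
  assumes "P \<in> carrier frac_ring"
  shows "\<exists>Q\<in>carrier frac_ring. Q \<oplus>\<^bsub>frac_ring\<^esub> P = \<zero>\<^bsub>frac_ring\<^esub>"
proof -
  obtain t a where "t \<in> T" "a \<in> carrier A" "P = frac t a" using assms by (rule frac_ring_elemE)
  then have "frac t (\<ominus> a) \<oplus>\<^bsub>frac_ring\<^esub> P = \<zero>\<^bsub>frac_ring\<^esub>"
    by (simp add: frac_add_same_denom l_neg frac_zero_eq frac_ring_zero)
  then show ?thesis using \<open>t \<in> T\<close> \<open>a \<in> carrier A\<close> frac_closed by blast
qed

lemma frac_mult_assoc:
  assumes "P \<in> carrier frac_ring" "Q \<in> carrier frac_ring" "R \<in> carrier frac_ring"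
  shows "P \<otimes>\<^bsub>frac_ring\<^esub> Q \<otimes>\<^bsub>frac_ring\<^esub> R = P \<otimes>\<^bsub>frac_ring\<^esub> (Q \<otimes>\<^bsub>frac_ring\<^esub> R)"
proof -
  obtain t1 a1 t2 a2 t3 a3 where m: "t1 \<in> T" "a1 \<in> carrier A" "t2 \<in> T" "a2 \<in> carrier A"
      "t3 \<in> T" "a3 \<in> carrier A" and PQR: "P = frac t1 a1" "Q = frac t2 a2" "R = frac t3 a3"
    using assms by (metis frac_ring_elemE)
  obtain v p where v: "v \<in> T" "p \<in> carrier A" and eq: "v \<otimes> a2 = p \<otimes> t3"
    using left_Ore[of a2 t3] m by blast
  obtain v' p' where v': "v' \<in> T" "p' \<in> carrier A" and eq': "v' \<otimes> a1 = p' \<otimes> (v \<otimes> t2)"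
    using left_Ore[of a1 "v \<otimes> t2"] m v mult_mem by blast
  have QR: "Q \<otimes>\<^bsub>frac_ring\<^esub> R = frac (v \<otimes> t2) (p \<otimes> a3)"
    using frac_mult[OF m(3,5,4,6) v eq] PQR by simp
  have right: "P \<otimes>\<^bsub>frac_ring\<^esub> (Q \<otimes>\<^bsub>frac_ring\<^esub> R) = frac (v' \<otimes> t1) (p' \<otimes> (p \<otimes> a3))"
    using frac_mult[OF m(1) mult_mem[OF v(1) m(3)] m(2) _ v' eq'] QR PQR m v by simp
  text \<open>The Ore witnesses chosen for the right-hand side serve for the left-hand side as well.\<close>
  have eq1: "v' \<otimes> a1 = (p' \<otimes> v) \<otimes> t2"
    using eq' m v v' by (simp add: m_assoc)
  have PQ: "P \<otimes>\<^bsub>frac_ring\<^esub> Q = frac (v' \<otimes> t1) ((p' \<otimes> v) \<otimes> a2)"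
    using frac_mult[OF m(1,3,2,4) v'(1) _ eq1] PQR v v' by simp
  have eq2: "\<one> \<otimes> ((p' \<otimes> v) \<otimes> a2) = (p' \<otimes> p) \<otimes> t3"
    using eq m v v' by (simp add: m_assoc)
  have "P \<otimes>\<^bsub>frac_ring\<^esub> Q \<otimes>\<^bsub>frac_ring\<^esub> R = frac (\<one> \<otimes> (v' \<otimes> t1)) ((p' \<otimes> p) \<otimes> a3)"
    using frac_mult[OF mult_mem[OF v'(1) m(1)] m(5) _ m(6) one_mem _ eq2] PQ PQR m v v' by simp
  then show ?thesis using right m v v' by (simp add: m_assoc)
qed

lemma frac_one_mult: "P \<in> carrier frac_ring \<Longrightarrow> \<one>\<^bsub>frac_ring\<^esub> \<otimes>\<^bsub>frac_ring\<^esub> P = P"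
  by (elim frac_ring_elemE) (simp add: frac_ring_one frac_mult[where v = \<one>] one_mem)

lemma frac_mult_one: "P \<in> carrier frac_ring \<Longrightarrow> P \<otimes>\<^bsub>frac_ring\<^esub> \<one>\<^bsub>frac_ring\<^esub> = P"
  by (elim frac_ring_elemE) (simp add: frac_ring_one frac_mult[where u = \<one>] one_mem)

lemma frac_ring_common_denom:
  assumes "P \<in> carrier frac_ring" "Q \<in> carrier frac_ring"
  obtains d b1 b2 where "d \<in> T" "b1 \<in> carrier A" "b2 \<in> carrier A" "P = frac d b1" "Q = frac d b2"
proof -
  obtain t1 a1 t2 a2 where "t1 \<in> T" "a1 \<in> carrier A" "P = frac t1 a1" "t2 \<in> T" "a2 \<in> carrier A"
      "Q = frac t2 a2"
    using assms by (metis frac_ring_elemE)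
  then show ?thesis using that by (metis frac_common_denom)
qed

lemma frac_distr_right:
  assumes "P \<in> carrier frac_ring" "Q \<in> carrier frac_ring" "R \<in> carrier frac_ring"
  shows "(P \<oplus>\<^bsub>frac_ring\<^esub> Q) \<otimes>\<^bsub>frac_ring\<^esub> R = P \<otimes>\<^bsub>frac_ring\<^esub> R \<oplus>\<^bsub>frac_ring\<^esub> Q \<otimes>\<^bsub>frac_ring\<^esub> R"
proof -
  obtain d b1 b2 where d: "d \<in> T" "b1 \<in> carrier A" "b2 \<in> carrier A" and P: "P = frac d b1" and Q: "Q = frac d b2"
    using assms(1,2) by (rule frac_ring_common_denom)
  obtain t a where t: "t \<in> T" "a \<in> carrier A" and R: "R = frac t a"
    using assms(3) by (rule frac_ring_elemE)
  obtain v1 w1 where v1: "v1 \<in> T" "w1 \<in> carrier A" and eq1: "v1 \<otimes> b1 = w1 \<otimes> t"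
    using left_Ore[of b1 t] d t by blast
  obtain v2 w2 where v2: "v2 \<in> T" "w2 \<in> carrier A" and eq2: "v2 \<otimes> (v1 \<otimes> b2) = w2 \<otimes> t"
    using left_Ore[OF m_closed[OF T_carrier[OF v1(1)] d(3)] t(1)] by blast
  have v: "v2 \<otimes> v1 \<in> T" using v1 v2 mult_mem by simp
  have e1: "(v2 \<otimes> v1) \<otimes> b1 = (v2 \<otimes> w1) \<otimes> t" and e2: "(v2 \<otimes> v1) \<otimes> b2 = w2 \<otimes> t"
    using d t v1 v2 by (simp_all add: m_assoc eq1 eq2)
  have e: "(v2 \<otimes> v1) \<otimes> (b1 \<oplus> b2) = (v2 \<otimes> w1 \<oplus> w2) \<otimes> t"
    using d t v1 v2 by (simp add: r_distr l_distr e1 e2)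
  have "(P \<oplus>\<^bsub>frac_ring\<^esub> Q) \<otimes>\<^bsub>frac_ring\<^esub> R = frac ((v2 \<otimes> v1) \<otimes> d) ((v2 \<otimes> w1 \<oplus> w2) \<otimes> a)"
    unfolding P Q R using d by (simp add: frac_add_same_denom frac_mult[OF _ _ _ _ v _ e] t v1 v2)
  moreover have "P \<otimes>\<^bsub>frac_ring\<^esub> R = frac ((v2 \<otimes> v1) \<otimes> d) ((v2 \<otimes> w1) \<otimes> a)"
    unfolding P R using d t v1 v2 by (simp add: frac_mult[OF _ _ _ _ v _ e1])
  moreover have "Q \<otimes>\<^bsub>frac_ring\<^esub> R = frac ((v2 \<otimes> v1) \<otimes> d) (w2 \<otimes> a)"
    unfolding Q R using d t v2 by (simp add: frac_mult[OF _ _ _ _ v _ e2])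
  moreover have "frac ((v2 \<otimes> v1) \<otimes> d) ((v2 \<otimes> w1) \<otimes> a) \<oplus>\<^bsub>frac_ring\<^esub> frac ((v2 \<otimes> v1) \<otimes> d) (w2 \<otimes> a)
      = frac ((v2 \<otimes> v1) \<otimes> d) ((v2 \<otimes> w1 \<oplus> w2) \<otimes> a)"
    using frac_add_same_denom[OF mult_mem[OF v d(1)]] l_distr[of "v2 \<otimes> w1" w2 a] t v1 v2 by simp
  ultimately show ?thesis by simp
qed

lemma frac_distr_left:
  assumes "P \<in> carrier frac_ring" "Q \<in> carrier frac_ring" "R \<in> carrier frac_ring"
  shows "R \<otimes>\<^bsub>frac_ring\<^esub> (P \<oplus>\<^bsub>frac_ring\<^esub> Q) = R \<otimes>\<^bsub>frac_ring\<^esub> P \<oplus>\<^bsub>frac_ring\<^esub> R \<otimes>\<^bsub>frac_ring\<^esub> Q"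
proof -
  obtain d b1 b2 where d: "d \<in> T" "b1 \<in> carrier A" "b2 \<in> carrier A" and P: "P = frac d b1" and Q: "Q = frac d b2"
    using assms(1,2) by (rule frac_ring_common_denom)
  obtain t a where t: "t \<in> T" "a \<in> carrier A" and R: "R = frac t a"
    using assms(3) by (rule frac_ring_elemE)
  obtain u r where u: "u \<in> T" "r \<in> carrier A" and eq: "u \<otimes> a = r \<otimes> d"
    using left_Ore[of a d] d t by blast
  have "R \<otimes>\<^bsub>frac_ring\<^esub> (P \<oplus>\<^bsub>frac_ring\<^esub> Q) = frac (u \<otimes> t) (r \<otimes> (b1 \<oplus> b2))"
    unfolding P Q R using d t by (simp add: frac_add_same_denom frac_mult[OF _ _ _ _ u eq])
  moreover have "R \<otimes>\<^bsub>frac_ring\<^esub> P = frac (u \<otimes> t) (r \<otimes> b1)" "R \<otimes>\<^bsub>frac_ring\<^esub> Q = frac (u \<otimes> t) (r \<otimes> b2)"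
    unfolding P Q R using d t by (simp_all add: frac_mult[OF _ _ _ _ u eq])
  ultimately show ?thesis
    using d t u mult_mem by (simp add: frac_add_same_denom r_distr)
qed

lemma ring_frac_ring: "ring frac_ring"
proof (rule ringI)
  show "abelian_group frac_ring"
  proof (rule abelian_groupI)
    show "\<zero>\<^bsub>frac_ring\<^esub> \<in> carrier frac_ring" by (simp add: frac_ring_zero frac_closed one_mem)
  qed (assumption | rule frac_add_closed frac_add_assoc frac_add_comm frac_zero_add frac_add_inverse)+
  show "monoid frac_ring"
  proof (rule monoidI)
    show "\<one>\<^bsub>frac_ring\<^esub> \<in> carrier frac_ring" by (simp add: frac_ring_one frac_closed one_mem)
  qed (assumption | rule frac_mult_closed frac_mult_assoc frac_one_mult frac_mult_one)+
qed (assumption | rule frac_distr_left frac_distr_right)+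

definition frac_embed :: "'a \<Rightarrow> ('a \<times> 'a) set" where
  "frac_embed a = frac \<one> a"

lemma frac_embed_hom: "frac_embed \<in> ring_hom A frac_ring"
proof (rule ring_hom_memI)
  fix x y assume x: "x \<in> carrier A" and y: "y \<in> carrier A"
  show "frac_embed x \<in> carrier frac_ring"
    unfolding frac_embed_def by (rule frac_closed[OF one_mem x])
  have "frac \<one> x \<otimes>\<^bsub>frac_ring\<^esub> frac \<one> y = frac (\<one> \<otimes> \<one>) (x \<otimes> y)"
    by (rule frac_mult[OF one_mem one_mem x y one_mem x]) (simp add: x)
  then show "frac_embed (x \<otimes> y) = frac_embed x \<otimes>\<^bsub>frac_ring\<^esub> frac_embed y"
    by (simp add: frac_embed_def)
  show "frac_embed (x \<oplus> y) = frac_embed x \<oplus>\<^bsub>frac_ring\<^esub> frac_embed y"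
    unfolding frac_embed_def by (rule frac_add_same_denom[OF one_mem x y, symmetric])
next
  show "frac_embed \<one> = \<one>\<^bsub>frac_ring\<^esub>" by (simp add: frac_embed_def frac_ring_one)
qed

lemma frac_embed_Units:
  assumes t: "t \<in> T"
  shows "frac_embed t \<in> Units frac_ring"
proof -
  have "frac \<one> t \<otimes>\<^bsub>frac_ring\<^esub> frac t \<one> = frac (\<one> \<otimes> \<one>) (\<one> \<otimes> \<one>)"
    by (rule frac_mult[OF one_mem t T_carrier[OF t] one_closed one_mem one_closed]) (simp add: t)
  then have r: "frac_embed t \<otimes>\<^bsub>frac_ring\<^esub> frac t \<one> = \<one>\<^bsub>frac_ring\<^esub>"
    by (simp add: frac_embed_def frac_ring_one)
  have "frac t \<one> \<otimes>\<^bsub>frac_ring\<^esub> frac \<one> t = frac (\<one> \<otimes> t) (\<one> \<otimes> t)"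
    by (rule frac_mult[OF t one_mem one_closed T_carrier[OF t] one_mem one_closed]) simp
  also have "\<dots> = frac (t \<otimes> \<one>) (t \<otimes> \<one>)" using t by simp
  also have "\<dots> = frac \<one> \<one>" by (rule frac_expand) (simp_all add: t one_mem)
  finally have l: "frac t \<one> \<otimes>\<^bsub>frac_ring\<^esub> frac_embed t = \<one>\<^bsub>frac_ring\<^esub>"
    by (simp add: frac_embed_def frac_ring_one)
  have "frac_embed t \<in> carrier frac_ring" "frac t \<one> \<in> carrier frac_ring"
    using t one_mem by (simp_all add: frac_embed_def frac_closed)
  with l r show ?thesis unfolding Units_def by blast
qed

lemma frac_embed_eq_zero_iff:
  assumes "a \<in> carrier A"
  shows "frac_embed a = \<zero>\<^bsub>frac_ring\<^esub> \<longleftrightarrow> a = \<zero>"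
proof
  assume "frac_embed a = \<zero>\<^bsub>frac_ring\<^esub>"
  then have "frac_rel (\<one>, a) (\<one>, \<zero>)"
    using assms one_mem by (simp add: frac_embed_def frac_ring_zero frac_eq_iff)
  from frac_relD[OF this one_closed one_closed] show "a = \<zero>" using assms by simp
qed (simp add: frac_embed_def frac_ring_zero)

end

section \<open>The ideal \<open>'a(T)\<close> and the kernel of \<open>A \<rightarrow> A\<langle>T\<inverse>\<rangle>\<close>\<close>

context almost_Ore_set
begin

definition left_regular_mod :: "'a set \<Rightarrow> bool" where
  "left_regular_mod b \<longleftrightarrow> (\<forall>x\<in>carrier A. \<forall>t\<in>T. x \<otimes> t \<in> b \<longrightarrow> x \<in> b)"

lemma image_left_regular_iff:
  assumes "ideal b A"
  shows "(\<forall>t\<in>T. b +> t \<in> left_regular (A Quot b)) \<longleftrightarrow> left_regular_mod b"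
proof -
  interpret b: ideal b A by fact
  have all_cosets: "(\<forall>P\<in>carrier (A Quot b). \<Phi> P) \<longleftrightarrow> (\<forall>x\<in>carrier A. \<Phi> (b +> x))" for \<Phi>
    using ring_hom_closed[OF b.rcos_ring_hom] by (metis b.FactRing_elemE)
  have "b +> t \<in> left_regular (A Quot b) \<longleftrightarrow> (\<forall>x\<in>carrier A. x \<otimes> t \<in> b \<longrightarrow> x \<in> b)" if t: "t \<in> T" for t
    using t ring_hom_closed[OF b.rcos_ring_hom T_carrier[OF t]]
    unfolding left_regular_def by (simp add: all_cosets b.rcos_mult b.rcos_eq_zero_iff T_carrier)
  then show ?thesis unfolding left_regular_mod_def by blast
qed

lemma prime_a_eq_Inter: "prime_a A T = \<Inter>{b. ideal b A \<and> left_regular_mod b}"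
  unfolding prime_a_def using image_left_regular_iff by (metis (no_types, lifting))

lemma ideal_prime_a: "ideal (prime_a A T) A"
  unfolding prime_a_eq_Inter
  by (rule i_Intersect) (use oneideal in \<open>auto simp: left_regular_mod_def\<close>)

lemma left_regular_mod_prime_a: "left_regular_mod (prime_a A T)"
  unfolding prime_a_eq_Inter left_regular_mod_def by blast

lemma prime_a_least: "ideal b A \<Longrightarrow> left_regular_mod b \<Longrightarrow> prime_a A T \<subseteq> b"
  unfolding prime_a_eq_Inter by blast

lemma prime_a_cancel_right:
  "x \<in> carrier A \<Longrightarrow> t \<in> T \<Longrightarrow> x \<otimes> t \<in> prime_a A T \<Longrightarrow> x \<in> prime_a A T"
  using left_regular_mod_prime_a unfolding left_regular_mod_def by blast

lemma prime_a_subset_carrier: "prime_a A T \<subseteq> carrier A"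
  using ideal.Icarr[OF ideal_prime_a] by blast

lemma ass_eq_kernel: "ass A T = a_kernel A U \<iota>"
  by (simp add: ass_def a_kernel_def')

lemma ideal_ass: "ideal (ass A T) A"
  unfolding ass_eq_kernel
  by (rule ring_hom_ring.kernel_is_ideal[OF ring_hom_ringI2[OF ring_axioms ring_univ_loc univ_map_hom]])

lemma left_regular_mod_ass: "left_regular_mod (ass A T)"
  unfolding left_regular_mod_def ass_def using univ_map_mult_right_eq_zero by auto

lemma prime_a_subset_ass: "prime_a A T \<subseteq> ass A T"
  by (rule prime_a_least[OF ideal_ass left_regular_mod_ass])

lemma left_Ore_mod_prime_a:
  assumes s: "s \<in> T" and r: "r \<in> carrier A"
  shows "\<exists>s1\<in>T. \<exists>r1\<in>carrier A. s1 \<otimes> r \<ominus> r1 \<otimes> s \<in> prime_a A T"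
proof -
  obtain s1 s2 r1 where s1: "s1 \<in> T" and s2: "s2 \<in> T" and r1: "r1 \<in> carrier A"
    and eq: "(s1 \<otimes> r \<ominus> r1 \<otimes> s) \<otimes> s2 = \<zero>"
    using almost_Ore[OF s r] by blast
  have "s1 \<otimes> r \<ominus> r1 \<otimes> s \<in> prime_a A T"
    using prime_a_cancel_right[of "s1 \<otimes> r \<ominus> r1 \<otimes> s" s2] eq s1 s2 r1 r s
      additive_subgroup.zero_closed[OF ideal.axioms(1)[OF ideal_prime_a]]
    by (simp add: T_carrier)
  with s1 r1 show ?thesis by blast
qed

definition prime_a_torsion :: "'a set" where
  "prime_a_torsion = {r \<in> carrier A. \<exists>t\<in>T. t \<otimes> r \<in> prime_a A T}"

lemma prime_a_torsionE:
  assumes "x \<in> prime_a_torsion"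
  obtains t where "x \<in> carrier A" "t \<in> T" "t \<otimes> x \<in> prime_a A T"
  using assms by (auto simp: prime_a_torsion_def)

lemma prime_a_torsionI: "x \<in> carrier A \<Longrightarrow> t \<in> T \<Longrightarrow> t \<otimes> x \<in> prime_a A T \<Longrightarrow> x \<in> prime_a_torsion"
  by (auto simp: prime_a_torsion_def)

lemma prime_a_subset_torsion: "prime_a A T \<subseteq> prime_a_torsion"
proof
  fix x assume x: "x \<in> prime_a A T"
  then have "x \<in> carrier A" using prime_a_subset_carrier by blast
  with x one_mem show "x \<in> prime_a_torsion" by (intro prime_a_torsionI[of x \<one>]) simp_all
qed

lemma prime_a_torsion_add:
  assumes x: "x \<in> prime_a_torsion" and y: "y \<in> prime_a_torsion"
  shows "x \<oplus> y \<in> prime_a_torsion"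
proof -
  interpret P: ideal "prime_a A T" A by (rule ideal_prime_a)
  obtain s where xc: "x \<in> carrier A" and s: "s \<in> T" "s \<otimes> x \<in> prime_a A T"
    using x by (rule prime_a_torsionE)
  obtain t where yc: "y \<in> carrier A" and t: "t \<in> T" "t \<otimes> y \<in> prime_a A T"
    using y by (rule prime_a_torsionE)
  obtain s1 r1 where s1: "s1 \<in> T" and r1: "r1 \<in> carrier A" and d: "s1 \<otimes> s \<ominus> r1 \<otimes> t \<in> prime_a A T"
    using left_Ore_mod_prime_a[OF t(1) T_carrier[OF s(1)]] by blast
  have "(s1 \<otimes> s) \<otimes> (x \<oplus> y) = s1 \<otimes> (s \<otimes> x) \<oplus> ((s1 \<otimes> s \<ominus> r1 \<otimes> t) \<otimes> y \<oplus> r1 \<otimes> (t \<otimes> y))"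
    using s1 r1 s t xc yc by (simp add: r_distr l_distr minus_eq m_assoc l_minus a_assoc l_neg T_carrier)
  also have "\<dots> \<in> prime_a A T"
    using P.a_closed[OF P.I_l_closed[OF s(2) T_carrier[OF s1]]
        P.a_closed[OF P.I_r_closed[OF d yc] P.I_l_closed[OF t(2) r1]]] .
  finally show ?thesis
    using mult_mem[OF s1 s(1)] xc yc by (intro prime_a_torsionI) simp_all
qed

lemma prime_a_torsion_uminus:
  assumes x: "x \<in> prime_a_torsion"
  shows "\<ominus> x \<in> prime_a_torsion"
proof -
  interpret P: ideal "prime_a A T" A by (rule ideal_prime_a)
  obtain s where xc: "x \<in> carrier A" and s: "s \<in> T" "s \<otimes> x \<in> prime_a A T"
    using x by (rule prime_a_torsionE)
  have "s \<otimes> (\<ominus> x) \<in> prime_a A T"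
    using s xc P.a_inv_closed[OF s(2)] by (simp add: r_minus T_carrier)
  then show ?thesis using s xc by (intro prime_a_torsionI) simp_all
qed

lemma prime_a_torsion_mult_left:
  assumes a: "a \<in> prime_a_torsion" and x: "x \<in> carrier A"
  shows "x \<otimes> a \<in> prime_a_torsion"
proof -
  interpret P: ideal "prime_a A T" A by (rule ideal_prime_a)
  obtain s where ac: "a \<in> carrier A" and s: "s \<in> T" "s \<otimes> a \<in> prime_a A T"
    using a by (rule prime_a_torsionE)
  obtain s1 r1 where s1: "s1 \<in> T" and r1: "r1 \<in> carrier A" and d: "s1 \<otimes> x \<ominus> r1 \<otimes> s \<in> prime_a A T"
    using left_Ore_mod_prime_a[OF s(1) x] by blast
  have "s1 \<otimes> (x \<otimes> a) = (s1 \<otimes> x \<ominus> r1 \<otimes> s) \<otimes> a \<oplus> r1 \<otimes> (s \<otimes> a)"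
    using s1 r1 s x ac by (simp add: l_distr minus_eq m_assoc l_minus a_assoc l_neg T_carrier)
  also have "\<dots> \<in> prime_a A T"
    using P.a_closed[OF P.I_r_closed[OF d ac] P.I_l_closed[OF s(2) r1]] .
  finally show ?thesis using s1 x ac by (intro prime_a_torsionI) simp_all
qed

lemma prime_a_torsion_mult_right:
  assumes a: "a \<in> prime_a_torsion" and x: "x \<in> carrier A"
  shows "a \<otimes> x \<in> prime_a_torsion"
proof -
  interpret P: ideal "prime_a A T" A by (rule ideal_prime_a)
  obtain s where ac: "a \<in> carrier A" and s: "s \<in> T" "s \<otimes> a \<in> prime_a A T"
    using a by (rule prime_a_torsionE)
  have "s \<otimes> (a \<otimes> x) \<in> prime_a A T"
    using s x ac P.I_r_closed[OF s(2) x] by (simp add: m_assoc[symmetric] T_carrier)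
  then show ?thesis using s x ac by (intro prime_a_torsionI) simp_all
qed

lemma ideal_prime_a_torsion: "ideal prime_a_torsion A"
proof (rule idealI[OF ring_axioms])
  have "\<zero> \<in> prime_a_torsion"
    using prime_a_subset_torsion additive_subgroup.zero_closed[OF ideal.axioms(1)[OF ideal_prime_a]] by blast
  then show "subgroup prime_a_torsion (add_monoid A)"
    by (intro add.subgroupI)
      (auto simp: prime_a_torsion_def[symmetric] prime_a_torsion_add prime_a_torsion_uminus
        elim: prime_a_torsionE)
qed (simp_all add: prime_a_torsion_mult_left prime_a_torsion_mult_right)

lemma prime_a_torsion_cancel_right:
  assumes x: "x \<in> carrier A" and t: "t \<in> T" and xt: "x \<otimes> t \<in> prime_a_torsion"
  shows "x \<in> prime_a_torsion"
proof -
  obtain u where u: "u \<in> T" "u \<otimes> (x \<otimes> t) \<in> prime_a A T"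
    using xt by (rule prime_a_torsionE)
  then have "(u \<otimes> x) \<otimes> t \<in> prime_a A T" using x t by (simp add: m_assoc T_carrier)
  then have "u \<otimes> x \<in> prime_a A T"
    using prime_a_cancel_right[OF _ t] u(1) x by (simp add: T_carrier)
  then show ?thesis using u x by (intro prime_a_torsionI)
qed

lemma prime_a_torsion_cancel_left:
  assumes x: "x \<in> carrier A" and t: "t \<in> T" and tx: "t \<otimes> x \<in> prime_a_torsion"
  shows "x \<in> prime_a_torsion"
proof -
  obtain u where u: "u \<in> T" "u \<otimes> (t \<otimes> x) \<in> prime_a A T"
    using tx by (rule prime_a_torsionE)
  then have "(u \<otimes> t) \<otimes> x \<in> prime_a A T" using x t by (simp add: m_assoc T_carrier)
  then show ?thesis using mult_mem[OF u(1) t] x by (intro prime_a_torsionI)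
qed

lemma left_Ore_regular_mod_torsion:
  "left_Ore_regular (A Quot prime_a_torsion) ((+>) prime_a_torsion ` T)"
proof -
  interpret I: ideal prime_a_torsion A by (rule ideal_prime_a_torsion)
  have "left_Ore_set (A Quot prime_a_torsion) ((+>) prime_a_torsion ` T)"
    using T_subset one_mem mult_mem left_Ore_mod_prime_a prime_a_subset_torsion
    by (intro I.left_Ore_set_FactRing) blast+
  moreover have "x = \<zero>\<^bsub>A Quot prime_a_torsion\<^esub>"
    if x: "x \<in> carrier (A Quot prime_a_torsion)" and t: "t \<in> (+>) prime_a_torsion ` T"
      and eq: "x \<otimes>\<^bsub>A Quot prime_a_torsion\<^esub> t = \<zero>\<^bsub>A Quot prime_a_torsion\<^esub>" for x t
  proof -
    obtain t0 where t0: "t0 \<in> T" "t = prime_a_torsion +> t0" using t by blast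
    show ?thesis
      using eq t0 I.FactRing_cancel_right[OF prime_a_torsion_cancel_right[OF _ t0(1)] T_carrier[OF t0(1)] x]
      by simp
  qed
  moreover have "x = \<zero>\<^bsub>A Quot prime_a_torsion\<^esub>"
    if x: "x \<in> carrier (A Quot prime_a_torsion)" and t: "t \<in> (+>) prime_a_torsion ` T"
      and eq: "t \<otimes>\<^bsub>A Quot prime_a_torsion\<^esub> x = \<zero>\<^bsub>A Quot prime_a_torsion\<^esub>" for x t
  proof -
    obtain t0 where t0: "t0 \<in> T" "t = prime_a_torsion +> t0" using t by blast
    show ?thesis
      using eq t0 I.FactRing_cancel_left[OF prime_a_torsion_cancel_left[OF _ t0(1)] T_carrier[OF t0(1)] x]
      by simp
  qed
  ultimately show ?thesis
    by (rule left_Ore_regularI[OF I.quotient_is_ring])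
qed

text \<open>The quotient by the torsion ideal embeds into its ring of left fractions, where
  \<open>T\<close> becomes invertible; by universality this embedding factors through \<open>A\<langle>T\<inverse>\<rangle>\<close>.\<close>

lemma ass_subset_prime_a_torsion: "ass A T \<subseteq> prime_a_torsion"
proof
  fix a assume a: "a \<in> ass A T"
  interpret I: ideal prime_a_torsion A by (rule ideal_prime_a_torsion)
  interpret F: left_Ore_regular "A Quot prime_a_torsion" "(+>) prime_a_torsion ` T"
    by (rule left_Ore_regular_mod_torsion)
  let ?f = "F.frac_embed \<circ> (+>) prime_a_torsion"
  have f: "?f \<in> ring_hom A F.frac_ring"
    by (rule ring_hom_trans[OF I.rcos_ring_hom F.frac_embed_hom])
  have "?f t \<in> Units F.frac_ring" if "t \<in> T" for t
    using F.frac_embed_Units that by simp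
  then obtain g where g: "g \<in> ring_hom U F.frac_ring" "\<And>a. a \<in> carrier A \<Longrightarrow> g (\<iota> a) = ?f a"
    using univ_map_lift[OF F.ring_frac_ring f] by metis
  have ac: "a \<in> carrier A" and "\<iota> a = \<zero>\<^bsub>U\<^esub>" using a by (auto simp: ass_def)
  then have "?f a = \<zero>\<^bsub>F.frac_ring\<^esub>"
    using g ring_hom_zero[OF g(1) ring_univ_loc F.ring_frac_ring] by metis
  then show "a \<in> prime_a_torsion"
    using F.frac_embed_eq_zero_iff[OF ring_hom_closed[OF I.rcos_ring_hom ac]] I.rcos_eq_zero_iff[OF ac]
    by simp
qed

lemma prime_a_torsion_subset_ass: "prime_a_torsion \<subseteq> ass A T"
proof
  fix r assume "r \<in> prime_a_torsion"
  then obtain t where r: "r \<in> carrier A" and t: "t \<in> T" "t \<otimes> r \<in> prime_a A T"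
    by (rule prime_a_torsionE)
  then have "\<iota> (t \<otimes> r) = \<zero>\<^bsub>U\<^esub>" using prime_a_subset_ass by (auto simp: ass_def)
  then show "r \<in> ass A T" using univ_map_mult_left_eq_zero[OF r t(1)] r by (simp add: ass_def)
qed

lemma ass_eq_prime_a_torsion: "ass A T = prime_a_torsion"
  using ass_subset_prime_a_torsion prime_a_torsion_subset_ass by blast

lemma prime_a_eq_carrier_iff: "prime_a A T = carrier A \<longleftrightarrow> \<one>\<^bsub>U\<^esub> = \<zero>\<^bsub>U\<^esub>"
proof
  assume "prime_a A T = carrier A"
  then have "\<one> \<in> ass A T" using prime_a_subset_ass by blast
  then show "\<one>\<^bsub>U\<^esub> = \<zero>\<^bsub>U\<^esub>" using ring_hom_one[OF univ_map_hom] by (simp add: ass_def)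
next
  assume "\<one>\<^bsub>U\<^esub> = \<zero>\<^bsub>U\<^esub>"
  then have "\<one> \<in> ass A T" using ring_hom_one[OF univ_map_hom] by (simp add: ass_def)
  then obtain t where t: "t \<in> T" "t \<otimes> \<one> \<in> prime_a A T"
    unfolding ass_eq_prime_a_torsion by (elim prime_a_torsionE)
  then have "\<one> \<in> prime_a A T" using prime_a_cancel_right[of \<one> t] by (simp add: T_carrier)
  then show "prime_a A T = carrier A" by (rule ideal.one_imp_carrier[OF ideal_prime_a])
qed

end

section \<open>Passing to the quotient by the right torsion ideal\<close>

lemma ring_hom_one_eq_zero:
  assumes "ring R" "ring S" "h \<in> ring_hom R S" "\<one>\<^bsub>R\<^esub> = \<zero>\<^bsub>R\<^esub>"
  shows "\<one>\<^bsub>S\<^esub> = \<zero>\<^bsub>S\<^esub>"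
  using assms ring_hom_one ring_hom_zero by metis

context almost_Ore_set
begin

abbreviation "I_r \<equiv> Idl (ass_r A T)"

lemma ideal_I_r: "ideal I_r A"
  by (rule genideal_ideal) (auto simp: ass_r_def)

lemma ass_r_subset_ass: "ass_r A T \<subseteq> ass A T"
  using left_regular_mod_ass additive_subgroup.zero_closed[OF ideal.axioms(1)[OF ideal_ass]]
  unfolding ass_r_def left_regular_mod_def by force

lemma I_r_subset_ass: "I_r \<subseteq> ass A T"
  by (rule genideal_minimal[OF ideal_ass ass_r_subset_ass])

lemma left_Ore_set_mod_I_r: "left_Ore_set (A Quot I_r) ((+>) I_r ` T)"
proof (rule ideal.left_Ore_set_FactRing[OF ideal_I_r T_subset one_mem mult_mem])
  fix s r assume s: "s \<in> T" and r: "r \<in> carrier A"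
  obtain s1 s2 r1 where s1: "s1 \<in> T" and s2: "s2 \<in> T" and r1: "r1 \<in> carrier A"
    and eq: "(s1 \<otimes> r \<ominus> r1 \<otimes> s) \<otimes> s2 = \<zero>"
    using almost_Ore[OF s r] by blast
  text \<open>The almost Ore condition becomes the Ore condition, since \<open>s1 r - r1 s\<close> is right torsion.\<close>
  have "s1 \<otimes> r \<ominus> r1 \<otimes> s \<in> ass_r A T"
    unfolding ass_r_def using eq s1 s2 r1 r s by (auto simp: T_carrier)
  then have "s1 \<otimes> r \<ominus> r1 \<otimes> s \<in> I_r"
    using genideal_self[of "ass_r A T"] by (auto simp: ass_r_def)
  then show "\<exists>s1\<in>T. \<exists>r1\<in>carrier A. s1 \<otimes> r \<ominus> r1 \<otimes> s \<in> I_r" using s1 r1 by blast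
qed

lemma almost_Ore_set_mod_I_r: "almost_Ore_set (A Quot I_r) ((+>) I_r ` T)"
  by (rule left_Ore_set_imp_almost_Ore_set[OF ideal.quotient_is_ring[OF ideal_I_r] left_Ore_set_mod_I_r])

lemma univ_loc_trivial_iff_mod_I_r:
  "\<one>\<^bsub>U\<^esub> = \<zero>\<^bsub>U\<^esub> \<longleftrightarrow> \<one>\<^bsub>univ_loc (A Quot I_r) ((+>) I_r ` T)\<^esub> = \<zero>\<^bsub>univ_loc (A Quot I_r) ((+>) I_r ` T)\<^esub>"
proof -
  interpret I: ideal I_r A by (rule ideal_I_r)
  interpret Q: almost_Ore_set "A Quot I_r" "(+>) I_r ` T" by (rule almost_Ore_set_mod_I_r)
  have f1: "Q.\<iota> \<circ> (+>) I_r \<in> ring_hom A Q.U"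
    by (rule ring_hom_trans[OF I.rcos_ring_hom Q.univ_map_hom])
  obtain g1 where g1: "g1 \<in> ring_hom U Q.U"
    using univ_map_lift[OF Q.ring_univ_loc f1] Q.univ_map_Units by (metis comp_apply image_eqI)
  obtain f2 where f2: "f2 \<in> ring_hom (A Quot I_r) U" "\<And>x. x \<in> carrier A \<Longrightarrow> f2 (I_r +> x) = \<iota> x"
    using I.FactRing_lift[OF ring_univ_loc univ_map_hom] I_r_subset_ass by (auto simp: ass_def)
  have "f2 s \<in> Units U" if "s \<in> (+>) I_r ` T" for s
    using that f2(2) univ_map_Units T_carrier by auto
  then obtain g2 where g2: "g2 \<in> ring_hom Q.U U"
    using Q.univ_map_lift[OF ring_univ_loc f2(1)] by metis
  show ?thesis
    using ring_hom_one_eq_zero[OF ring_univ_loc Q.ring_univ_loc g1]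
      ring_hom_one_eq_zero[OF Q.ring_univ_loc ring_univ_loc g2] by blast
qed

section \<open>Reduction modulo \<open>'a(T)\<close>\<close>

lemma left_denominator_set_mod_prime_a:
  "left_denominator_set (A Quot prime_a A T) ((+>) (prime_a A T) ` T)"
proof -
  interpret P: ideal "prime_a A T" A by (rule ideal_prime_a)
  interpret Q: ring "A Quot prime_a A T" by (rule P.quotient_is_ring)
  have "left_Ore_set (A Quot prime_a A T) ((+>) (prime_a A T) ` T)"
    using T_subset one_mem mult_mem left_Ore_mod_prime_a by (rule P.left_Ore_set_FactRing)
  moreover have "\<exists>t\<in>(+>) (prime_a A T) ` T. t \<otimes>\<^bsub>A Quot prime_a A T\<^esub> r = \<zero>\<^bsub>A Quot prime_a A T\<^esub>"
    if r: "r \<in> carrier (A Quot prime_a A T)" and s: "s \<in> (+>) (prime_a A T) ` T"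
      and rs: "r \<otimes>\<^bsub>A Quot prime_a A T\<^esub> s = \<zero>\<^bsub>A Quot prime_a A T\<^esub>" for r s
  proof -
    obtain s0 where s0: "s0 \<in> T" "s = prime_a A T +> s0" using s by blast
    have "r = \<zero>\<^bsub>A Quot prime_a A T\<^esub>"
      using rs s0 P.FactRing_cancel_right[OF prime_a_cancel_right[OF _ s0(1)] T_carrier[OF s0(1)] r]
      by simp
    then show ?thesis
      using r ring_hom_one[OF P.rcos_ring_hom] one_mem by (metis Q.l_one image_eqI)
  qed
  ultimately show ?thesis
    unfolding left_denominator_set_def by blast
qed

lemma image_subset_left_regular_mod_prime_a:
  "(+>) (prime_a A T) ` T \<subseteq> left_regular (A Quot prime_a A T)"
  using image_left_regular_iff[OF ideal_prime_a] left_regular_mod_prime_a by blast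

lemma ass_eq_vimage_ass_l:
  "ass A T = {r \<in> carrier A. prime_a A T +> r \<in> ass_l (A Quot prime_a A T) ((+>) (prime_a A T) ` T)}"
proof -
  interpret P: ideal "prime_a A T" A by (rule ideal_prime_a)
  have "prime_a A T +> r \<in> ass_l (A Quot prime_a A T) ((+>) (prime_a A T) ` T) \<longleftrightarrow> r \<in> prime_a_torsion"
    if r: "r \<in> carrier A" for r
    using r ring_hom_closed[OF P.rcos_ring_hom r]
    by (auto simp: ass_l_def prime_a_torsion_def P.rcos_mult P.rcos_eq_zero_iff T_carrier)
  then show ?thesis
    using ass_eq_prime_a_torsion by (auto simp: prime_a_torsion_def)
qed

lemma univ_loc_iso_left_Ore_loc:
  fixes B :: "('c, 'n) ring_scheme" and \<sigma> :: "'a set \<Rightarrow> 'c"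
  assumes "is_left_Ore_loc (A Quot prime_a A T) ((+>) (prime_a A T) ` T) B \<sigma>"
  shows "\<exists>\<psi>. \<psi> \<in> ring_iso U B \<and> (\<forall>r\<in>carrier A. \<psi> (\<iota> r) = \<sigma> (prime_a A T +> r))"
proof -
  interpret P: ideal "prime_a A T" A by (rule ideal_prime_a)
  have B: "ring B" and \<sigma>: "\<sigma> \<in> ring_hom (A Quot prime_a A T) B"
    and units: "\<forall>t\<in>(+>) (prime_a A T) ` T. \<sigma> t \<in> Units B"
    and fractions: "\<forall>b\<in>carrier B. \<exists>t\<in>(+>) (prime_a A T) ` T. \<exists>a\<in>carrier (A Quot prime_a A T).
        b = inv\<^bsub>B\<^esub> (\<sigma> t) \<otimes>\<^bsub>B\<^esub> \<sigma> a"
    and kernel: "\<forall>a\<in>carrier (A Quot prime_a A T).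
        \<sigma> a = \<zero>\<^bsub>B\<^esub> \<longleftrightarrow> a \<in> ass_l (A Quot prime_a A T) ((+>) (prime_a A T) ` T)"
    using assms unfolding is_left_Ore_loc_def by auto
  define f where "f = \<sigma> \<circ> (+>) (prime_a A T)"
  have "\<exists>\<psi>. \<psi> \<in> ring_iso U B \<and> (\<forall>a\<in>carrier A. \<psi> (\<iota> a) = f a)"
  proof (rule univ_loc_iso[OF B])
    show "f \<in> ring_hom A B" unfolding f_def by (rule ring_hom_trans[OF P.rcos_ring_hom \<sigma>])
    show "f t \<in> Units B" if "t \<in> T" for t using units that by (simp add: f_def)
    show "a \<in> ass A T" if a: "a \<in> carrier A" and "f a = \<zero>\<^bsub>B\<^esub>" for a
      using that kernel ring_hom_closed[OF P.rcos_ring_hom a] by (subst ass_eq_vimage_ass_l) (simp add: f_def)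
    show "\<exists>t\<in>T. \<exists>a\<in>carrier A. b = inv\<^bsub>B\<^esub> (f t) \<otimes>\<^bsub>B\<^esub> f a" if "b \<in> carrier B" for b
    proof -
      obtain t' a' where t': "t' \<in> (+>) (prime_a A T) ` T" and a': "a' \<in> carrier (A Quot prime_a A T)"
        and b: "b = inv\<^bsub>B\<^esub> (\<sigma> t') \<otimes>\<^bsub>B\<^esub> \<sigma> a'"
        using fractions \<open>b \<in> carrier B\<close> by blast
      obtain t where t: "t \<in> T" "t' = prime_a A T +> t" using t' by blast
      obtain a where a: "a \<in> carrier A" "a' = prime_a A T +> a" using a' by (rule P.FactRing_elemE)
      show ?thesis using t a b by (auto simp: f_def)
    qed
  qed
  then show ?thesis by (simp add: f_def)
qed

end

theorem theorem4p2:
  fixes R :: "('a,'m) ring_scheme" and S :: "'a set"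
  assumes "ring R" and "almost_left_Ore R S"
  shows "left_Ore_set (R Quot (Idl\<^bsub>R\<^esub> (ass_r R S))) ((\<lambda>s. Idl\<^bsub>R\<^esub> (ass_r R S) +>\<^bsub>R\<^esub> s) ` S)
       \<and> (left_localizable R S \<longleftrightarrow>
            left_localizable (R Quot (Idl\<^bsub>R\<^esub> (ass_r R S))) ((\<lambda>s. Idl\<^bsub>R\<^esub> (ass_r R S) +>\<^bsub>R\<^esub> s) ` S))
       \<and> (left_localizable (R Quot (Idl\<^bsub>R\<^esub> (ass_r R S))) ((\<lambda>s. Idl\<^bsub>R\<^esub> (ass_r R S) +>\<^bsub>R\<^esub> s) ` S) \<longleftrightarrow>
            prime_a (R Quot (Idl\<^bsub>R\<^esub> (ass_r R S))) ((\<lambda>s. Idl\<^bsub>R\<^esub> (ass_r R S) +>\<^bsub>R\<^esub> s) ` S)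
              \<noteq> carrier (R Quot (Idl\<^bsub>R\<^esub> (ass_r R S))))
       \<and> (prime_a (R Quot (Idl\<^bsub>R\<^esub> (ass_r R S))) ((\<lambda>s. Idl\<^bsub>R\<^esub> (ass_r R S) +>\<^bsub>R\<^esub> s) ` S)
              \<noteq> carrier (R Quot (Idl\<^bsub>R\<^esub> (ass_r R S)))
            \<longleftrightarrow> prime_a R S \<noteq> carrier R)
       \<and> (prime_a R S \<noteq> carrier R \<longrightarrow>
         left_denominator_set (R Quot prime_a R S) ((\<lambda>s. prime_a R S +>\<^bsub>R\<^esub> s) ` S)
       \<and> (\<lambda>s. prime_a R S +>\<^bsub>R\<^esub> s) ` S \<subseteq> left_regular (R Quot prime_a R S)
       \<and> ass R S = {r \<in> carrier R. prime_a R S +>\<^bsub>R\<^esub> r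
                        \<in> ass_l (R Quot prime_a R S) ((\<lambda>s. prime_a R S +>\<^bsub>R\<^esub> s) ` S)}
       \<and> (\<forall>(B :: ('c,'n) ring_scheme) \<sigma>.
            is_left_Ore_loc (R Quot prime_a R S) ((\<lambda>s. prime_a R S +>\<^bsub>R\<^esub> s) ` S) B \<sigma> \<longrightarrow>
            (\<exists>\<psi>. \<psi> \<in> ring_iso (univ_loc R S) B \<and>
                 (\<forall>r\<in>carrier R. \<psi> (univ_map R S r) = \<sigma> (prime_a R S +>\<^bsub>R\<^esub> r)))))"
proof -
  interpret almost_Ore_set R S using assms by (rule almost_left_Ore_imp_almost_Ore_set)
  interpret R_r: almost_Ore_set "R Quot (Idl\<^bsub>R\<^esub> (ass_r R S))" "(+>\<^bsub>R\<^esub>) (Idl\<^bsub>R\<^esub> (ass_r R S)) ` S"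
    by (rule almost_Ore_set_mod_I_r)
  have "left_localizable R S \<longleftrightarrow> \<one>\<^bsub>univ_loc R S\<^esub> \<noteq> \<zero>\<^bsub>univ_loc R S\<^esub>"
    and "prime_a R S \<noteq> carrier R \<longleftrightarrow> \<one>\<^bsub>univ_loc R S\<^esub> \<noteq> \<zero>\<^bsub>univ_loc R S\<^esub>"
    using left_localizable_iff_nontrivial prime_a_eq_carrier_iff by simp_all
  moreover have "left_localizable (R Quot (Idl\<^bsub>R\<^esub> (ass_r R S))) ((+>\<^bsub>R\<^esub>) (Idl\<^bsub>R\<^esub> (ass_r R S)) ` S)
      \<longleftrightarrow> \<one>\<^bsub>univ_loc R S\<^esub> \<noteq> \<zero>\<^bsub>univ_loc R S\<^esub>"
    and "prime_a (R Quot (Idl\<^bsub>R\<^esub> (ass_r R S))) ((+>\<^bsub>R\<^esub>) (Idl\<^bsub>R\<^esub> (ass_r R S)) ` S)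
        \<noteq> carrier (R Quot (Idl\<^bsub>R\<^esub> (ass_r R S))) \<longleftrightarrow> \<one>\<^bsub>univ_loc R S\<^esub> \<noteq> \<zero>\<^bsub>univ_loc R S\<^esub>"
    using R_r.left_localizable_iff_nontrivial R_r.prime_a_eq_carrier_iff univ_loc_trivial_iff_mod_I_r
    by simp_all
  ultimately show ?thesis
    using left_Ore_set_mod_I_r left_denominator_set_mod_prime_a image_subset_left_regular_mod_prime_a
      ass_eq_vimage_ass_l by (simp add: univ_loc_iso_left_Ore_loc)
qed

end
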